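(* Let $H=(Q,\pi,f_0,f_1)$ satisfy Assumptions A1 and A2 and assume that the distribution function of $(f_1/f_0)(X_1)$ is continuous and strictly increasing. For each $N$ define $g(x)=g_N(x)=\sup\{\mathrm{mTDR}_H(\psi):\mathrm{mFDR}_H(\psi)\le x\}$, the supremum over all multiple testing procedures $\psi$ based on $X=(X_1,\dots,X_N)$. Then for any sequences $x_N,y_N$ with $|x_N-y_N|\to0$, $$|g_N(x_N)-g_N(y_N)|\to0\quad\text{as }N\to\infty.$$
   Context: Two-state HMM: $\mu$ Lebesgue on $\mathbb R$ or counting on $\mathbb Z$; under $\Pi_H$, $\theta=(\theta_n)_{n\le N}$ is a Markov chain on $\{0,1\}$ (initial law $\pi$, transition $Q$) and given $\theta$ the $X_n$ are independent with $\mu$-densities $f_{\theta_n}$; $E_H$ denotes expectation. Assumption A1: (i) some $\nu>0$ has $\max_jE_{X\sim f_j}|X|^\nu<\infty$; (ii) some $x^*\in\mathbb R\cup\{\pm\infty\}$ has $f_1/f_0\to\infty$ as $x\uparrow x^*$ or as $x\downarrow x^*$ (conventions $1/0=\infty,0/0=0$). Assumption A2: $Q$ has distinct rows, $\min_{ij}Q_{ij}>0$, $\pi$ invariant for $Q$. A multiple testing procedure is a measurable map $X\mapsto\psi(X)\in\{0,1\}^N$ (possibly depending on $H$). $\mathrm{mTDR}_H(\psi)=\frac{E_H\#\{i:\theta_i=1,\psi_i=1\}}{E_H\#\{i:\theta_i=1\}}$, $\mathrm{mFDR}_H(\psi)=\frac{E_H\#\{i:\theta_i=0,\psi_i=1\}}{E_H\#\{i:\psi_i=1\}}$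 with $0/0=0$. *)

theory Defs
  imports "HOL-Probability.Probability"
begin

text \<open>States are the naturals 0 and 1;
  \<open>p0\<close> is the initial law, \<open>Q\<close> the transition matrix, \<open>f j\<close> the
  \<open>mu\<close>-density of an observation in state j.  Observations are indexed
  0, ..., N-1 (the paper's 1, ..., N).\<close>

definition obs_measure :: "bool \<Rightarrow> real measure" where
  "obs_measure disc = (if disc then count_space \<int> else lborel)"

definition LR :: "(nat \<Rightarrow> real \<Rightarrow> real) \<Rightarrow> real \<Rightarrow> ereal" where
  "LR f x = (if f 0 x = 0 then (if f 1 x = 0 then 0 else \<infinity>) else ereal (f 1 x / f 0 x))"

definition is_density :: "bool \<Rightarrow> (real \<Rightarrow> real) \<Rightarrow> bool" where
  "is_density disc h \<longleftrightarrow> h \<in> borel_measurable (obs_measure disc) \<and> (\<forall>x. 0 \<le> h x)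
     \<and> (\<integral>\<^sup>+ x. ennreal (h x) \<partial>obs_measure disc) = 1"

definition A1 :: "bool \<Rightarrow> (nat \<Rightarrow> real \<Rightarrow> real) \<Rightarrow> bool" where
  "A1 disc f \<longleftrightarrow>
     (\<exists>\<nu>>0. \<forall>j\<in>{0,1::nat}. (\<integral>\<^sup>+ x. ennreal (f j x * \<bar>x\<bar> powr \<nu>) \<partial>obs_measure disc) < \<infinity>) \<and>
     (\<exists>xs::ereal.
        (case xs of
           ereal a \<Rightarrow> \<not> disc \<and> (((LR f) \<longlongrightarrow> \<infinity>) (at_left a) \<or> ((LR f) \<longlongrightarrow> \<infinity>) (at_right a))
         | PInfty \<Rightarrow> ((LR f) \<longlongrightarrow> \<infinity>) (inf at_top (principal (space (obs_measure disc))))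
         | MInfty \<Rightarrow> ((LR f) \<longlongrightarrow> \<infinity>) (inf at_bot (principal (space (obs_measure disc))))))"

text \<open>Assumption A2 (together with: Q is a stochastic matrix, p0 a probability vector).\<close>
definition A2 :: "(nat \<Rightarrow> nat \<Rightarrow> real) \<Rightarrow> (nat \<Rightarrow> real) \<Rightarrow> bool" where
  "A2 Q p0 \<longleftrightarrow>
     (\<forall>i\<in>{0,1}. \<forall>j\<in>{0,1}. Q i j > 0) \<and> (\<forall>i\<in>{0,1}. Q i 0 + Q i 1 = 1) \<and>
     (Q 0 0 \<noteq> Q 1 0 \<or> Q 0 1 \<noteq> Q 1 1) \<and>
     (\<forall>j\<in>{0,1}. 0 \<le> p0 j) \<and> p0 0 + p0 1 = 1 \<and>
     (\<forall>j\<in>{0,1}. p0 j = p0 0 * Q 0 j + p0 1 * Q 1 j)"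

text \<open>Distribution function of (f1/f0)(X_1); X_1 has density pi0 f0 + pi1 f1.\<close>
definition LR_cdf :: "bool \<Rightarrow> (nat \<Rightarrow> real) \<Rightarrow> (nat \<Rightarrow> real \<Rightarrow> real) \<Rightarrow> real \<Rightarrow> real" where
  "LR_cdf disc p0 f t = (\<Sum>j\<in>{0,1::nat}. p0 j *
      enn2real (\<integral>\<^sup>+ x. ennreal (f j x) * indicator {y. LR f y \<le> ereal t} x \<partial>obs_measure disc))"

definition states :: "nat \<Rightarrow> (nat \<Rightarrow> nat) set" where
  "states N = PiE {..<N} (\<lambda>_. {0,1})"

definition obs_space :: "bool \<Rightarrow> nat \<Rightarrow> (nat \<Rightarrow> real) measure" where
  "obs_space disc N = PiM {..<N} (\<lambda>_. obs_measure disc)"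

text \<open>Joint density of (theta, X) w.r.t. counting measure times mu^N.\<close>
definition hmm_dens :: "(nat \<Rightarrow> real) \<Rightarrow> (nat \<Rightarrow> nat \<Rightarrow> real) \<Rightarrow> (nat \<Rightarrow> real \<Rightarrow> real) \<Rightarrow> nat
    \<Rightarrow> (nat \<Rightarrow> nat) \<Rightarrow> (nat \<Rightarrow> real) \<Rightarrow> real" where
  "hmm_dens p0 Q f N \<theta> x =
     p0 (\<theta> 0) * (\<Prod>n\<in>{1..<N}. Q (\<theta> (n - 1)) (\<theta> n)) * (\<Prod>n<N. f (\<theta> n) (x n))"

text \<open>A (non-randomised) multiple testing procedure: measurable map X \<mapsto> psi(X) \<in> {0,1}^N.\<close>
definition is_mtp :: "bool \<Rightarrow> nat \<Rightarrow> ((nat \<Rightarrow> real) \<Rightarrow> nat \<Rightarrow> bool) \<Rightarrow> bool" where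
  "is_mtp disc N \<psi> \<longleftrightarrow> (\<forall>i<N. (\<lambda>x. \<psi> x i) \<in> measurable (obs_space disc N) (count_space UNIV))"

text \<open>\<open>exp_count \<dots> \<psi> A\<close> = E_H #{i : theta_i \<in> A, psi_i = 1}.\<close>
definition exp_count :: "bool \<Rightarrow> (nat \<Rightarrow> real) \<Rightarrow> (nat \<Rightarrow> nat \<Rightarrow> real) \<Rightarrow> (nat \<Rightarrow> real \<Rightarrow> real)
    \<Rightarrow> nat \<Rightarrow> ((nat \<Rightarrow> real) \<Rightarrow> nat \<Rightarrow> bool) \<Rightarrow> nat set \<Rightarrow> real" where
  "exp_count disc p0 Q f N \<psi> A =
     (\<Sum>i<N. \<Sum>\<theta>\<in>states N. if \<theta> i \<in> A then
        (\<integral>x. hmm_dens p0 Q f N \<theta> x * indicator {y. \<psi> y i} x \<partial>obs_space disc N) else 0)"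

definition mTDR :: "bool \<Rightarrow> (nat \<Rightarrow> real) \<Rightarrow> (nat \<Rightarrow> nat \<Rightarrow> real) \<Rightarrow> (nat \<Rightarrow> real \<Rightarrow> real)
    \<Rightarrow> nat \<Rightarrow> ((nat \<Rightarrow> real) \<Rightarrow> nat \<Rightarrow> bool) \<Rightarrow> real" where
  "mTDR disc p0 Q f N \<psi> =
     exp_count disc p0 Q f N \<psi> {1} / exp_count disc p0 Q f N (\<lambda>_ _. True) {1}"

definition mFDR :: "bool \<Rightarrow> (nat \<Rightarrow> real) \<Rightarrow> (nat \<Rightarrow> nat \<Rightarrow> real) \<Rightarrow> (nat \<Rightarrow> real \<Rightarrow> real)
    \<Rightarrow> nat \<Rightarrow> ((nat \<Rightarrow> real) \<Rightarrow> nat \<Rightarrow> bool) \<Rightarrow> real" where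
  "mFDR disc p0 Q f N \<psi> =
     exp_count disc p0 Q f N \<psi> {0} / exp_count disc p0 Q f N \<psi> {0,1}"

definition opt_TDR :: "bool \<Rightarrow> (nat \<Rightarrow> real) \<Rightarrow> (nat \<Rightarrow> nat \<Rightarrow> real) \<Rightarrow> (nat \<Rightarrow> real \<Rightarrow> real)
    \<Rightarrow> nat \<Rightarrow> real \<Rightarrow> real" where
  "opt_TDR disc p0 Q f N t =
     Sup (mTDR disc p0 Q f N ` {\<psi>. is_mtp disc N \<psi> \<and> mFDR disc p0 Q f N \<psi> \<le> t})"

end

theory Submission
  imports Defs
begin

text \<open>Write \<open>V\<close> and \<open>T\<close> for the expected numbers of false and true discoveries of a procedure,
  so that \<open>mTDR = T / (N \<pi>\<^sub>1)\<close> and \<open>mFDR \<le> x\<close> iff \<open>V - x (V + T) \<le> 0\<close>, a sum of contributions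
  of the individual tests.  Since all transition probabilities are positive, changing one hidden
  state changes the joint density of states and observations by at most a fixed factor \<open>K\<close>.  So
  where \<open>f\<^sub>1/f\<^sub>0 < M\<close>, a test makes at least \<open>1 / (K M)\<close> expected false discoveries per true one;
  where \<open>f\<^sub>0 = 0\<close> it makes none, and \<open>\<infinity> > f\<^sub>1/f\<^sub>0 \<ge> M\<close> carries little \<open>f\<^sub>1\<close>-mass for large \<open>M\<close>.
  Near level 0 this gives \<open>g\<^sub>N(s) \<le> g\<^sub>N(0) + \<epsilon>\<close> for small \<open>s\<close>, uniformly in \<open>N\<close>.
  Away from 0, strict monotonicity of the distribution function of \<open>f\<^sub>1/f\<^sub>0\<close> provides the test
  \<open>f\<^sub>1/f\<^sub>0 > M\<close> with a contribution at most \<open>-\<gamma> < 0\<close>; substituting it for about \<open>\<delta> N / \<gamma>\<close> tests of a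
  procedure feasible at level \<open>x + \<delta>\<close> makes it feasible at level \<open>x\<close> and costs at most
  \<open>\<delta> / \<gamma> + 1 / N\<close> in mTDR.  Since \<open>g\<^sub>N\<close> is nondecreasing, the resulting increment bound, uniform
  in \<open>N\<close> and \<open>x\<close>, yields the claim.\<close>

lemma exists_subset_card_sum_nonneg:
  fixes h :: "'a \<Rightarrow> 'b::linordered_ab_group_add"
  assumes "finite A" and "0 \<le> sum h A" and "k \<le> card A"
  shows "\<exists>S\<subseteq>A. card S = k \<and> 0 \<le> sum h S"
  using assms
proof (induction "card A - k" arbitrary: A)
  case 0
  then show ?case by (intro exI[of _ A]) simp
next
  case (Suc d)
  show ?case
  proof (cases "\<exists>a\<in>A. h a \<le> 0")
    case True
    then obtain a where a: "a \<in> A" "h a \<le> 0" by blast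
    have "d = card (A - {a}) - k" "k \<le> card (A - {a})" "0 \<le> sum h (A - {a})"
      using Suc a by (simp_all add: sum_diff1)
    then obtain S where "S \<subseteq> A - {a}" "card S = k" "0 \<le> sum h S"
      using Suc.hyps(1)[of "A - {a}"] Suc.prems(1) by auto
    then show ?thesis by blast
  next
    case False
    obtain S where S: "S \<subseteq> A" "card S = k"
      using obtain_subset_with_card_n[OF Suc.prems(3)] by blast
    then have "0 \<le> sum h S" using False by (intro sum_nonneg) force
    then show ?thesis using S by blast
  qed
qed

lemma sum_if_mem:
  fixes a b :: "'a \<Rightarrow> 'b::ab_group_add"
  assumes "S \<subseteq> A" and "finite A"
  shows "(\<Sum>i\<in>A. if i \<in> S then a i else b i) = sum b A + (\<Sum>i\<in>S. a i - b i)"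
proof -
  have "(\<Sum>i\<in>A. if i \<in> S then a i else b i) = (\<Sum>i\<in>A. b i + (if i \<in> S then a i - b i else 0))"
    by (rule sum.cong) auto
  also have "\<dots> = sum b A + (\<Sum>i\<in>S. a i - b i)"
    using assms by (simp add: sum.distrib sum.If_cases Int_absorb1)
  finally show ?thesis .
qed

lemma nn_integral_prod_coord_indicator:
  fixes h :: "'i \<Rightarrow> 'a \<Rightarrow> ennreal"
  assumes M: "sigma_finite_measure M" and I: "finite I" "i \<in> I" and B: "B \<in> sets M"
    and h: "\<And>n. n \<in> I \<Longrightarrow> h n \<in> borel_measurable M"
  shows "(\<integral>\<^sup>+x. (\<Prod>n\<in>I. h n (x n)) * indicator {y. y i \<in> B} x \<partial>PiM I (\<lambda>_. M))
    = (\<integral>\<^sup>+z. h i z * indicator B z \<partial>M) * (\<Prod>n\<in>I - {i}. \<integral>\<^sup>+z. h n z \<partial>M)"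
proof -
  interpret product_sigma_finite "\<lambda>_. M" using M by (simp add: product_sigma_finite_def)
  define g where "g n z = h n z * (if n = i then indicator B z else 1)" for n z
  have g: "g n \<in> borel_measurable M" if "n \<in> I" for n
  proof -
    note h[OF that, measurable] B[measurable]
    show ?thesis unfolding g_def by measurable
  qed
  have "(\<Prod>n\<in>I. h n (x n)) * indicator {y. y i \<in> B} x = (\<Prod>n\<in>I. g n (x n))" for x
    using I by (simp add: g_def prod.distrib prod.delta indicator_def)
  then have "(\<integral>\<^sup>+x. (\<Prod>n\<in>I. h n (x n)) * indicator {y. y i \<in> B} x \<partial>PiM I (\<lambda>_. M))
      = (\<Prod>n\<in>I. \<integral>\<^sup>+z. g n z \<partial>M)"
    using product_nn_integral_prod[OF I(1) g] by simp
  also have "\<dots> = (\<integral>\<^sup>+z. g i z \<partial>M) * (\<Prod>n\<in>I - {i}. \<integral>\<^sup>+z. g n z \<partial>M)"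
    using I by (rule prod.remove)
  also have "\<dots> = (\<integral>\<^sup>+z. h i z * indicator B z \<partial>M) * (\<Prod>n\<in>I - {i}. \<integral>\<^sup>+z. h n z \<partial>M)"
    by (auto simp: g_def intro!: prod.cong)
  finally show ?thesis .
qed

definition splice :: "'i set \<Rightarrow> ('x \<Rightarrow> 'i \<Rightarrow> 'b) \<Rightarrow> ('x \<Rightarrow> 'i \<Rightarrow> 'b) \<Rightarrow> 'x \<Rightarrow> 'i \<Rightarrow> 'b" where
  "splice S \<phi> \<psi> = (\<lambda>y i. if i \<in> S then \<phi> y i else \<psi> y i)"

lemma sum_splice:
  fixes F :: "'i \<Rightarrow> ('x \<Rightarrow> 'b) \<Rightarrow> 'c::ab_group_add"
  assumes "S \<subseteq> A" and "finite A"
  shows "(\<Sum>i\<in>A. F i (\<lambda>y. splice S \<phi> \<psi> y i))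
    = (\<Sum>i\<in>A. F i (\<lambda>y. \<psi> y i)) + (\<Sum>i\<in>S. F i (\<lambda>y. \<phi> y i) - F i (\<lambda>y. \<psi> y i))"
proof -
  have "F i (\<lambda>y. splice S \<phi> \<psi> y i) = (if i \<in> S then F i (\<lambda>y. \<phi> y i) else F i (\<lambda>y. \<psi> y i))" for i
    by (simp add: splice_def)
  then show ?thesis using sum_if_mem[OF assms] by simp
qed

lemma eventually_uniform_increment_bound:
  fixes g :: "nat \<Rightarrow> real \<Rightarrow> real" and e :: real
  assumes mono: "\<And>N x y. 1 \<le> N \<Longrightarrow> 0 \<le> x \<Longrightarrow> x \<le> y \<Longrightarrow> g N x \<le> g N y"
    and near_zero: "\<And>e. 0 < e \<Longrightarrow> \<exists>s>0. \<forall>N\<ge>1. g N s \<le> g N 0 + e"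
    and away_from_zero: "\<And>x0. 0 < x0 \<Longrightarrow> \<exists>\<gamma>>0. \<forall>N\<ge>2. \<forall>x\<ge>x0. \<forall>d. 0 \<le> d \<and> d \<le> \<gamma> / 2
        \<longrightarrow> g N (x + d) \<le> g N x + d / \<gamma> + 1 / real N"
    and e: "0 < e"
  shows "\<exists>\<delta>>0. \<forall>\<^sub>F N in sequentially. \<forall>x\<ge>0. \<forall>d. 0 \<le> d \<and> d \<le> \<delta> \<longrightarrow> g N (x + d) \<le> g N x + e"
proof -
  obtain s where s: "0 < s" "\<And>N. 1 \<le> N \<Longrightarrow> g N s \<le> g N 0 + e"
    using near_zero[OF e] by blast
  obtain \<gamma> where \<gamma>: "0 < \<gamma>" and away: "\<And>N x d. 2 \<le> N \<Longrightarrow> s / 2 \<le> x \<Longrightarrow> 0 \<le> d \<Longrightarrow> d \<le> \<gamma> / 2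
      \<Longrightarrow> g N (x + d) \<le> g N x + d / \<gamma> + 1 / real N"
    using away_from_zero[of "s / 2"] s by auto
  define \<delta> where "\<delta> = min (s / 2) (min (\<gamma> / 2) (\<gamma> * e / 2))"
  obtain n0 :: nat where n0: "2 / e < real n0" using reals_Archimedean2 by blast
  have "g N (x + d) \<le> g N x + e"
    if N: "max 2 n0 \<le> N" and x: "0 \<le> x" and d: "0 \<le> d" "d \<le> \<delta>" for N x d
  proof (cases "s / 2 \<le> x")
    case True
    have "d / \<gamma> \<le> e / 2" using d \<gamma> by (simp add: \<delta>_def divide_le_eq mult.commute)
    moreover have "1 / real N \<le> e / 2"
    proof -
      have "2 / e < real N" using n0 N by (simp add: less_le_trans)
      moreover have "0 < real N" using N by simp
      ultimately show ?thesis using e by (simp add: field_simps)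
    qed
    moreover have "g N (x + d) \<le> g N x + d / \<gamma> + 1 / real N"
      using away[OF _ True d(1)] N d by (simp add: \<delta>_def)
    ultimately show ?thesis by linarith
  next
    case False
    then have "g N (x + d) \<le> g N s" using mono[of N "x + d" s] N x d by (simp add: \<delta>_def)
    also have "\<dots> \<le> g N 0 + e" using s(2) N by simp
    also have "g N 0 \<le> g N x" using mono[of N 0 x] N x by simp
    finally show ?thesis by simp
  qed
  moreover have "0 < \<delta>" using s \<gamma> e by (simp add: \<delta>_def)
  ultimately show ?thesis unfolding eventually_sequentially by blast
qed

lemma tendsto_abs_diff_zero_if_uniform_increment_bound:
  fixes g :: "nat \<Rightarrow> real \<Rightarrow> real" and xs ys :: "nat \<Rightarrow> real"
  assumes mono: "\<And>N x y. 1 \<le> N \<Longrightarrow> 0 \<le> x \<Longrightarrow> x \<le> y \<Longrightarrow> g N x \<le> g N y"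
    and incr: "\<And>e. 0 < e \<Longrightarrow> \<exists>\<delta>>0. \<forall>\<^sub>F N in sequentially. \<forall>x\<ge>0. \<forall>d. 0 \<le> d \<and> d \<le> \<delta>
        \<longrightarrow> g N (x + d) \<le> g N x + e"
    and nonneg: "\<And>N. 0 \<le> xs N" "\<And>N. 0 \<le> ys N"
    and close: "(\<lambda>N. \<bar>xs N - ys N\<bar>) \<longlonglongrightarrow> 0"
  shows "(\<lambda>N. \<bar>g N (xs N) - g N (ys N)\<bar>) \<longlonglongrightarrow> 0"
proof (rule order_tendstoI)
  fix a :: real
  assume "a < 0"
  then show "\<forall>\<^sub>F N in sequentially. a < \<bar>g N (xs N) - g N (ys N)\<bar>"
    by (simp add: less_le_trans)
next
  fix e :: real
  assume e: "0 < e"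
  obtain \<delta> where \<delta>: "0 < \<delta>" and incr_\<delta>: "\<forall>\<^sub>F N in sequentially. \<forall>x\<ge>0. \<forall>d. 0 \<le> d \<and> d \<le> \<delta>
      \<longrightarrow> g N (x + d) \<le> g N x + e / 2"
    using incr[of "e / 2"] e by auto
  have "\<forall>\<^sub>F N in sequentially. \<bar>xs N - ys N\<bar> < \<delta>" using order_tendstoD(2)[OF close \<delta>] by simp
  then show "\<forall>\<^sub>F N in sequentially. \<bar>g N (xs N) - g N (ys N)\<bar> < e"
    using incr_\<delta> eventually_ge_at_top[of 1]
  proof eventually_elim
    case (elim N)
    have "\<bar>g N b - g N a\<bar> \<le> e / 2" if "0 \<le> a" "a \<le> b" "b - a < \<delta>" for a b
      using elim(2)[rule_format, of a "b - a"] mono[of N a b] elim(3) that by simp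
    from this[of "xs N" "ys N"] this[of "ys N" "xs N"] show ?case
      using nonneg[of N] elim(1) e by (cases "xs N \<le> ys N") (auto simp: abs_minus_commute)
  qed
qed

section \<open>The hidden Markov chain\<close>

locale two_state_hmm =
  fixes disc :: bool and p0 :: "nat \<Rightarrow> real" and Q :: "nat \<Rightarrow> nat \<Rightarrow> real"
    and f :: "nat \<Rightarrow> real \<Rightarrow> real"
  assumes dens: "\<forall>j\<in>{0,1::nat}. is_density disc (f j)"
    and A2: "A2 Q p0"
begin

lemma Q_pos: "i \<in> {0,1} \<Longrightarrow> j \<in> {0,1} \<Longrightarrow> 0 < Q i j"
  and Q_row_sum: "i \<in> {0,1} \<Longrightarrow> Q i 0 + Q i 1 = 1"
  and p0_nonneg: "j \<in> {0,1} \<Longrightarrow> 0 \<le> p0 j"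
  and p0_sum: "p0 0 + p0 1 = 1"
  and p0_stationary: "j \<in> {0,1} \<Longrightarrow> p0 j = p0 0 * Q 0 j + p0 1 * Q 1 j"
  using A2 unfolding A2_def by blast+

lemma Q_le_one: "i \<in> {0,1} \<Longrightarrow> j \<in> {0,1} \<Longrightarrow> Q i j \<le> 1"
  using Q_row_sum[of i] Q_pos[of i 0] Q_pos[of i 1] by auto

lemma p0_le_one: "j \<in> {0,1} \<Longrightarrow> p0 j \<le> 1"
  using p0_sum p0_nonneg[of 0] p0_nonneg[of 1] by auto

lemma p0_pos:
  assumes j: "j \<in> {0,1}"
  shows "0 < p0 j"
proof -
  have "0 < p0 0 \<or> 0 < p0 1" using p0_sum by auto
  then have "0 < p0 0 * Q 0 j + p0 1 * Q 1 j"
    using Q_pos[of 0 j] Q_pos[of 1 j] p0_nonneg[of 0] p0_nonneg[of 1] j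
    by (auto intro: add_pos_nonneg add_nonneg_pos)
  then show ?thesis using p0_stationary[OF j] by simp
qed

lemma states_memD: "\<theta> \<in> states N \<Longrightarrow> n < N \<Longrightarrow> \<theta> n \<in> {0,1}"
  unfolding states_def by auto

lemma finite_states: "finite (states N)"
  unfolding states_def by (rule finite_PiE) auto

lemma states_0: "states 0 = {\<lambda>_. undefined}"
  unfolding states_def by simp

lemma states_fun_upd: "\<theta> \<in> states N \<Longrightarrow> i < N \<Longrightarrow> k \<in> {0,1} \<Longrightarrow> \<theta>(i := k) \<in> states N"
  unfolding states_def by (auto simp: PiE_iff extensional_def)

lemma sum_states_Suc:
  "(\<Sum>\<theta>\<in>states (Suc N). F \<theta>) = (\<Sum>\<theta>\<in>states N. \<Sum>s\<in>{0,1::nat}. F (\<theta>(N := s)))"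
proof -
  have eq: "states (Suc N) = (\<lambda>(s, \<theta>). \<theta>(N := s)) ` ({0,1} \<times> states N)"
    unfolding states_def lessThan_Suc by (rule PiE_insert_eq)
  have inj: "inj_on (\<lambda>(s, \<theta>). \<theta>(N := s)) ({0,1::nat} \<times> states N)"
    unfolding states_def by (rule inj_combinator) auto
  have "(\<Sum>\<theta>\<in>states (Suc N). F \<theta>) = (\<Sum>(s, \<theta>)\<in>{0,1} \<times> states N. F (\<theta>(N := s)))"
    unfolding eq sum.reindex[OF inj] by (simp add: case_prod_unfold)
  also have "\<dots> = (\<Sum>s\<in>{0,1::nat}. \<Sum>\<theta>\<in>states N. F (\<theta>(N := s)))"
    by (rule sum.cartesian_product[symmetric])
  finally show ?thesis by (subst sum.swap)
qed

definition path_weight :: "nat \<Rightarrow> (nat \<Rightarrow> nat) \<Rightarrow> real" where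
  "path_weight N \<theta> = p0 (\<theta> 0) * (\<Prod>n\<in>{1..<N}. Q (\<theta> (n - 1)) (\<theta> n))"

lemma path_weight_fun_upd_Suc:
  assumes N: "1 \<le> N"
  shows "path_weight (Suc N) (\<theta>(N := s)) = path_weight N \<theta> * Q (\<theta> (N - 1)) s"
proof -
  have "{1..<Suc N} = insert N {1..<N}" using N by auto
  moreover have "(\<Prod>n\<in>{1..<N}. Q ((\<theta>(N := s)) (n - 1)) ((\<theta>(N := s)) n))
      = (\<Prod>n\<in>{1..<N}. Q (\<theta> (n - 1)) (\<theta> n))"
    by (rule prod.cong) auto
  moreover have "(\<theta>(N := s)) (N - 1) = \<theta> (N - 1)" "(\<theta>(N := s)) 0 = \<theta> 0" using N by auto
  ultimately show ?thesis by (simp add: path_weight_def)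
qed

lemma path_weight_nonneg:
  assumes \<theta>: "\<theta> \<in> states N" and N: "1 \<le> N"
  shows "0 \<le> path_weight N \<theta>"
  unfolding path_weight_def
proof (intro mult_nonneg_nonneg prod_nonneg)
  show "0 \<le> p0 (\<theta> 0)" using p0_nonneg states_memD[OF \<theta>] N by simp
  fix n
  assume "n \<in> {1..<N}"
  then have "n - 1 < N" "n < N" by auto
  then have "\<theta> (n - 1) \<in> {0,1}" "\<theta> n \<in> {0,1}" using states_memD[OF \<theta>] by blast+
  then show "0 \<le> Q (\<theta> (n - 1)) (\<theta> n)" using Q_pos less_imp_le by blast
qed

lemma sum_path_weight_last_state:
  "1 \<le> N \<Longrightarrow> j \<in> {0,1} \<Longrightarrow>
    (\<Sum>\<theta>\<in>states N. if \<theta> (N - 1) = j then path_weight N \<theta> else 0) = p0 j"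
proof (induction N arbitrary: j rule: nat_induct_at_least)
  case base
  then show ?case by (auto simp: sum_states_Suc states_0 path_weight_def)
next
  case (Suc N)
  have "(\<Sum>\<theta>\<in>states (Suc N). if \<theta> (Suc N - 1) = j then path_weight (Suc N) \<theta> else 0)
      = (\<Sum>\<theta>\<in>states N. path_weight N \<theta> * Q (\<theta> (N - 1)) j)"
    using Suc by (simp add: sum_states_Suc path_weight_fun_upd_Suc)
  also have "\<dots> = (\<Sum>\<theta>\<in>states N. \<Sum>k\<in>{0,1::nat}. (if \<theta> (N - 1) = k then path_weight N \<theta> else 0) * Q k j)"
    using Suc.hyps by (intro sum.cong) (auto dest: states_memD[of _ N "N - 1"])
  also have "\<dots> = (\<Sum>k\<in>{0,1::nat}. p0 k * Q k j)"
    using Suc by (subst sum.swap) (simp add: sum_distrib_right[symmetric])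
  also have "\<dots> = p0 j" using p0_stationary[OF Suc.prems] by simp
  finally show ?case .
qed

lemma sum_path_weight_state:
  "i < N \<Longrightarrow> j \<in> {0,1} \<Longrightarrow> (\<Sum>\<theta>\<in>states N. if \<theta> i = j then path_weight N \<theta> else 0) = p0 j"
proof (induction N)
  case 0
  then show ?case by simp
next
  case (Suc N)
  show ?case
  proof (cases "i = N")
    case True
    then show ?thesis using sum_path_weight_last_state[of "Suc N" j] Suc.prems by simp
  next
    case False
    then have i: "i < N" using Suc.prems by simp
    have upd: "path_weight (Suc N) (\<theta>(N := s)) = path_weight N \<theta> * Q (\<theta> (N - 1)) s"
      "(\<theta>(N := s)) i = \<theta> i" for \<theta> s
      using path_weight_fun_upd_Suc[of N] i by auto
    have "(\<Sum>\<theta>\<in>states (Suc N). if \<theta> i = j then path_weight (Suc N) \<theta> else 0)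
        = (\<Sum>\<theta>\<in>states N. if \<theta> i = j then path_weight N \<theta> * (Q (\<theta> (N - 1)) 0 + Q (\<theta> (N - 1)) 1) else 0)"
      unfolding sum_states_Suc upd by (auto simp: distrib_left intro!: sum.cong)
    also have "\<dots> = (\<Sum>\<theta>\<in>states N. if \<theta> i = j then path_weight N \<theta> else 0)"
      using i Q_row_sum states_memD[of _ N "N - 1"] by (intro sum.cong) auto
    finally show ?thesis using Suc.IH i Suc.prems by simp
  qed
qed

definition min_prob :: real where
  "min_prob = Min {p0 0, p0 1, Q 0 0, Q 0 1, Q 1 0, Q 1 1}"

lemma min_prob_pos: "0 < min_prob"
  unfolding min_prob_def using p0_pos[of 0] p0_pos[of 1] Q_pos[of 0 0] Q_pos[of 0 1] Q_pos[of 1 0] Q_pos[of 1 1]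
  by simp

lemma min_prob_le_p0: "j \<in> {0,1} \<Longrightarrow> min_prob \<le> p0 j"
  and min_prob_le_Q: "i \<in> {0,1} \<Longrightarrow> j \<in> {0,1} \<Longrightarrow> min_prob \<le> Q i j"
  unfolding min_prob_def by auto

text \<open>Changing the state at one time changes at most the initial factor and two transition
  factors of a path weight, so it changes the weight by a factor of at most \<open>flip_bound\<close>.\<close>

definition flip_bound :: real where
  "flip_bound = 1 / min_prob ^ 3"

lemma flip_bound_pos: "0 < flip_bound"
  unfolding flip_bound_def using min_prob_pos by simp

lemma path_weight_le_flip:
  assumes \<theta>: "\<theta> \<in> states N" and i: "i < N" and k: "k \<in> {0,1}"
  shows "path_weight N \<theta> \<le> flip_bound * path_weight N (\<theta>(i := k))"
proof -
  define \<theta>' where "\<theta>' = \<theta>(i := k)"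
  have \<theta>': "\<theta>' \<in> states N" unfolding \<theta>'_def using states_fun_upd \<theta> i k .
  define g where "g \<eta> n = Q (\<eta> (n - 1)) (\<eta> n)" for \<eta> :: "nat \<Rightarrow> nat" and n
  define B where "B = {1..<N} \<inter> {i, Suc i}"
  define P where "P = prod (g \<theta>) ({1..<N} - B)"
  have g_bounds: "min_prob \<le> g \<eta> n \<and> g \<eta> n \<le> 1" if "\<eta> \<in> states N" "n \<in> {1..<N}" for \<eta> n
    using that states_memD[of \<eta> N "n - 1"] states_memD[of \<eta> N n]
    by (auto simp: g_def intro!: min_prob_le_Q Q_le_one)
  have g_nonneg: "0 \<le> g \<eta> n" if "\<eta> \<in> states N" "n \<in> {1..<N}" for \<eta> n
    using g_bounds[OF that] min_prob_pos by linarith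
  have split: "path_weight N \<eta> = p0 (\<eta> 0) * (prod (g \<eta>) ({1..<N} - B) * prod (g \<eta>) B)" for \<eta>
    unfolding path_weight_def B_def
    using prod.subset_diff[where A = "{1..<N}" and B = "{1..<N} \<inter> {i, Suc i}" and g = "g \<eta>"]
    by (simp add: g_def)
  have same: "prod (g \<theta>') ({1..<N} - B) = P"
    unfolding P_def by (rule prod.cong) (auto simp: g_def \<theta>'_def B_def)
  have P_nonneg: "0 \<le> P" unfolding P_def using g_nonneg[OF \<theta>] by (intro prod_nonneg) auto
  have "path_weight N \<theta> \<le> 1 * (P * 1)"
    unfolding split P_def using g_nonneg[OF \<theta>] g_bounds[OF \<theta>] p0_le_one states_memD[OF \<theta>] i
    by (intro mult_mono prod_le_1 prod_nonneg mult_nonneg_nonneg) (auto simp: B_def)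
  moreover have "min_prob ^ 2 \<le> prod (g \<theta>') B"
  proof -
    have "card B \<le> card {i, Suc i}" unfolding B_def by (intro card_mono) auto
    then have "card B \<le> 2" by simp
    then have "min_prob ^ 2 \<le> min_prob ^ card B"
      using min_prob_pos min_prob_le_p0[of 0] p0_le_one[of 0] by (intro power_decreasing) auto
    also have "\<dots> \<le> prod (g \<theta>') B"
      using g_bounds[OF \<theta>'] min_prob_pos unfolding B_def
      by (subst prod_constant[symmetric]) (intro prod_mono, auto)
    finally show ?thesis .
  qed
  moreover have "min_prob \<le> p0 (\<theta>' 0)" using min_prob_le_p0 states_memD[OF \<theta>'] i by simp
  ultimately have "min_prob * (P * min_prob ^ 2) \<le> p0 (\<theta>' 0) * (P * prod (g \<theta>') B)"
    using P_nonneg min_prob_pos by (intro mult_mono mult_left_mono) auto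
  then have "P * min_prob ^ 3 \<le> path_weight N \<theta>'"
    unfolding split[of \<theta>'] same by (simp add: power3_eq_cube power2_eq_square mult_ac)
  moreover have "path_weight N \<theta> * min_prob ^ 3 \<le> P * min_prob ^ 3"
    using \<open>path_weight N \<theta> \<le> 1 * (P * 1)\<close> min_prob_pos by (intro mult_right_mono) auto
  ultimately have "path_weight N \<theta> * min_prob ^ 3 \<le> path_weight N \<theta>'" by linarith
  then show ?thesis
    unfolding flip_bound_def \<theta>'_def using min_prob_pos by (simp add: field_simps)
qed

section \<open>Joint laws of hidden states and observations\<close>

abbreviation "\<mu> \<equiv> obs_measure disc"
abbreviation "obsN N \<equiv> obs_space disc N"
abbreviation is_event :: "nat \<Rightarrow> ((nat \<Rightarrow> real) \<Rightarrow> bool) \<Rightarrow> bool" where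
  "is_event N \<phi> \<equiv> \<phi> \<in> measurable (obsN N) (count_space UNIV)"

lemma sigma_finite_obs: "sigma_finite_measure \<mu>"
proof (cases disc)
  case True
  then show ?thesis unfolding obs_measure_def
    using sigma_finite_measure_count_space_countable[OF countable_int] by simp
next
  case False
  then show ?thesis unfolding obs_measure_def using sigma_finite_lborel by simp
qed

lemma f_measurable[measurable]: "j \<in> {0,1} \<Longrightarrow> f j \<in> borel_measurable \<mu>"
  and f_nonneg: "j \<in> {0,1} \<Longrightarrow> 0 \<le> f j x"
  and nn_integral_f: "j \<in> {0,1} \<Longrightarrow> (\<integral>\<^sup>+ x. ennreal (f j x) \<partial>\<mu>) = 1"
  using dens unfolding is_density_def by blast+

lemma hmm_dens_eq: "hmm_dens p0 Q f N \<theta> x = path_weight N \<theta> * (\<Prod>n<N. f (\<theta> n) (x n))"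
  unfolding hmm_dens_def path_weight_def by simp

definition emission :: "nat \<Rightarrow> real set \<Rightarrow> ennreal" where
  "emission j B = (\<integral>\<^sup>+ z. ennreal (f j z) * indicator B z \<partial>\<mu>)"

lemma emission_le_one:
  assumes j: "j \<in> {0,1}"
  shows "emission j B \<le> 1"
proof -
  have "emission j B \<le> (\<integral>\<^sup>+ z. ennreal (f j z) \<partial>\<mu>)"
    unfolding emission_def by (intro nn_integral_mono) (auto simp: indicator_def)
  then show ?thesis using nn_integral_f[OF j] by simp
qed

definition emission_prob :: "nat \<Rightarrow> real set \<Rightarrow> real" where
  "emission_prob j B = enn2real (emission j B)"

lemma emission_prob_nonneg: "0 \<le> emission_prob j B"
  unfolding emission_prob_def by simp

lemma emission_eq_emission_prob:
  assumes j: "j \<in> {0,1}"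
  shows "emission j B = ennreal (emission_prob j B)"
proof -
  have "emission j B \<noteq> \<top>" using emission_le_one[OF j, of B] by (auto simp: top_unique)
  then show ?thesis unfolding emission_prob_def by (simp add: ennreal_enn2real_if)
qed

lemma emission_prob_space:
  assumes j: "j \<in> {0,1}"
  shows "emission_prob j (space \<mu>) = 1"
proof -
  have "emission j (space \<mu>) = (\<integral>\<^sup>+ z. ennreal (f j z) \<partial>\<mu>)"
    unfolding emission_def by (intro nn_integral_cong) (auto simp: indicator_def)
  then show ?thesis using nn_integral_f[OF j] unfolding emission_prob_def by simp
qed

lemma measurable_f_component:
  assumes "\<theta> \<in> states N" "n < N"
  shows "(\<lambda>x. f (\<theta> n) (x n)) \<in> borel_measurable (obsN N)"
proof -
  have t: "\<theta> n \<in> {0,1}" using states_memD assms by blast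
  have c: "(\<lambda>x. x n) \<in> measurable (obsN N) \<mu>"
    unfolding obs_space_def by (rule measurable_component_singleton) (use assms in simp)
  show ?thesis by (rule measurable_compose[OF c f_measurable[OF t]])
qed

lemma hmm_dens_measurable:
  assumes "\<theta> \<in> states N"
  shows "(\<lambda>x. hmm_dens p0 Q f N \<theta> x) \<in> borel_measurable (obsN N)"
  unfolding hmm_dens_eq
  by (intro borel_measurable_times borel_measurable_const borel_measurable_prod measurable_f_component[OF assms]) simp

lemma hmm_dens_nonneg: "\<theta> \<in> states N \<Longrightarrow> N \<ge> 1 \<Longrightarrow> 0 \<le> hmm_dens p0 Q f N \<theta> x"
  unfolding hmm_dens_eq
  by (intro mult_nonneg_nonneg path_weight_nonneg prod_nonneg f_nonneg) (auto dest: states_memD)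

lemma nn_integral_hmm_dens_coord:
  assumes \<theta>: "\<theta> \<in> states N" and i: "i < N" and B: "B \<in> sets \<mu>"
  shows "(\<integral>\<^sup>+x. ennreal (hmm_dens p0 Q f N \<theta> x * indicator {y. y i \<in> B} x) \<partial>obsN N)
    = ennreal (path_weight N \<theta>) * emission (\<theta> i) B"
proof -
  have \<theta>_val: "n < N \<Longrightarrow> \<theta> n \<in> {0,1}" for n using states_memD[OF \<theta>] .
  define h where "h n z = ennreal (f (\<theta> n) z)" for n z
  have h: "h n \<in> borel_measurable \<mu>" if "n \<in> {..<N}" for n
  proof -
    have "\<theta> n \<in> {0,1}" using \<theta>_val that by simp
    note f_measurable[OF this, measurable]
    show ?thesis unfolding h_def by measurable
  qed
  have "ennreal (hmm_dens p0 Q f N \<theta> x * indicator {y. y i \<in> B} x)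
      = ennreal (path_weight N \<theta>) * ((\<Prod>n\<in>{..<N}. h n (x n)) * indicator {y. y i \<in> B} x)" for x
  proof -
    have "(\<Prod>n\<in>{..<N}. h n (x n)) = ennreal (\<Prod>n\<in>{..<N}. f (\<theta> n) (x n))"
      unfolding h_def using f_nonneg \<theta>_val by (intro prod_ennreal) auto
    moreover have "0 \<le> (\<Prod>n\<in>{..<N}. f (\<theta> n) (x n))"
      using f_nonneg \<theta>_val by (intro prod_nonneg) auto
    ultimately show ?thesis
      using path_weight_nonneg[OF \<theta>] i by (simp add: hmm_dens_eq ennreal_mult indicator_def)
  qed
  then have "(\<integral>\<^sup>+x. ennreal (hmm_dens p0 Q f N \<theta> x * indicator {y. y i \<in> B} x) \<partial>obsN N)
      = ennreal (path_weight N \<theta>)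
        * (\<integral>\<^sup>+x. (\<Prod>n\<in>{..<N}. h n (x n)) * indicator {y. y i \<in> B} x \<partial>obsN N)"
    using h B i unfolding obs_space_def by (simp add: nn_integral_cmult)
  also have "\<dots> = ennreal (path_weight N \<theta>)
      * ((\<integral>\<^sup>+z. h i z * indicator B z \<partial>\<mu>) * (\<Prod>n\<in>{..<N} - {i}. \<integral>\<^sup>+z. h n z \<partial>\<mu>))"
    unfolding obs_space_def using sigma_finite_obs i B h
    by (subst nn_integral_prod_coord_indicator) auto
  also have "\<dots> = ennreal (path_weight N \<theta>) * emission (\<theta> i) B"
    using nn_integral_f \<theta>_val by (simp add: h_def emission_def)
  finally show ?thesis .
qed

lemma obs_space_component: "x \<in> space (obsN N) \<Longrightarrow> n < N \<Longrightarrow> x n \<in> space \<mu>"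
  unfolding obs_space_def by (auto simp: space_PiM PiE_iff)

lemma is_event_coord:
  assumes n: "n < N" and B: "B \<in> sets \<mu>"
  shows "is_event N (\<lambda>y. y n \<in> B)"
proof -
  have c: "(\<lambda>x. x n) \<in> measurable (obsN N) \<mu>"
    unfolding obs_space_def by (rule measurable_component_singleton) (use n in simp)
  show ?thesis by (rule pred_sets2[OF B c])
qed

lemma integrable_hmm_dens:
  assumes \<theta>: "\<theta> \<in> states N" and N1: "N \<ge> 1"
  shows "integrable (obsN N) (hmm_dens p0 Q f N \<theta>)"
proof (rule integrableI_nonneg)
  show "hmm_dens p0 Q f N \<theta> \<in> borel_measurable (obsN N)" using hmm_dens_measurable[OF \<theta>] by simp
  show "AE x in obsN N. 0 \<le> hmm_dens p0 Q f N \<theta> x" using hmm_dens_nonneg[OF \<theta> N1] by simp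
  have "(\<integral>\<^sup>+x. ennreal (hmm_dens p0 Q f N \<theta> x) \<partial>obsN N)
     = (\<integral>\<^sup>+x. ennreal (hmm_dens p0 Q f N \<theta> x * indicator {y. y 0 \<in> space \<mu>} x) \<partial>obsN N)"
    by (intro nn_integral_cong) (use obs_space_component N1 in \<open>auto simp: indicator_def\<close>)
  also have "\<dots> = ennreal (path_weight N \<theta>) * emission (\<theta> 0) (space \<mu>)"
    using nn_integral_hmm_dens_coord[OF \<theta>, of 0 "space \<mu>"] N1 by simp
  also have "\<dots> < \<infinity>"
  proof -
    have "emission (\<theta> 0) (space \<mu>) \<le> 1" using emission_le_one states_memD[OF \<theta>, of 0] N1 by simp
    then have "emission (\<theta> 0) (space \<mu>) < \<top>" using ennreal_one_less_top le_less_trans by blast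
    then show ?thesis by (simp add: ennreal_mult_less_top)
  qed
  finally show "(\<integral>\<^sup>+x. ennreal (hmm_dens p0 Q f N \<theta> x) \<partial>obsN N) < \<infinity>" .
qed

definition path_prob :: "nat \<Rightarrow> (nat \<Rightarrow> nat) \<Rightarrow> ((nat \<Rightarrow> real) \<Rightarrow> bool) \<Rightarrow> real" where
  "path_prob N \<theta> \<phi> = (\<integral>x. hmm_dens p0 Q f N \<theta> x * indicator {y. \<phi> y} x \<partial>obsN N)"

lemma integrable_hmm_dens_event:
  assumes \<theta>: "\<theta> \<in> states N" and N1: "N \<ge> 1" and \<phi>: "is_event N \<phi>"
  shows "integrable (obsN N) (\<lambda>x. hmm_dens p0 Q f N \<theta> x * indicator {y. \<phi> y} x)"
proof -
  have A: "{y \<in> space (obsN N). \<phi> y} \<in> sets (obsN N)" using predE[OF \<phi>] .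
  have "integrable (obsN N) (\<lambda>x. indicator {y \<in> space (obsN N). \<phi> y} x *\<^sub>R hmm_dens p0 Q f N \<theta> x)"
    by (rule integrable_mult_indicator[OF A integrable_hmm_dens[OF \<theta> N1]])
  moreover have "integrable (obsN N) (\<lambda>x. indicator {y \<in> space (obsN N). \<phi> y} x *\<^sub>R hmm_dens p0 Q f N \<theta> x)
     \<longleftrightarrow> integrable (obsN N) (\<lambda>x. hmm_dens p0 Q f N \<theta> x * indicator {y. \<phi> y} x)"
    by (rule Bochner_Integration.integrable_cong) (auto simp: indicator_def)
  ultimately show ?thesis by simp
qed

lemma path_prob_nonneg: "\<theta> \<in> states N \<Longrightarrow> N \<ge> 1 \<Longrightarrow> 0 \<le> path_prob N \<theta> \<phi>"
  unfolding path_prob_def by (rule Bochner_Integration.integral_nonneg, rule mult_nonneg_nonneg) (auto intro: hmm_dens_nonneg)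

lemma path_prob_mono:
  assumes \<theta>: "\<theta> \<in> states N" and N1: "N \<ge> 1" and \<phi>: "is_event N \<phi>" and \<phi>': "is_event N \<phi>'"
    and imp: "\<And>x. x \<in> space (obsN N) \<Longrightarrow> \<phi> x \<Longrightarrow> \<phi>' x"
  shows "path_prob N \<theta> \<phi> \<le> path_prob N \<theta> \<phi>'"
  unfolding path_prob_def
  using integrable_hmm_dens_event[OF \<theta> N1 \<phi>] integrable_hmm_dens_event[OF \<theta> N1 \<phi>']
    imp hmm_dens_nonneg[OF \<theta> N1]
  by (intro Bochner_Integration.integral_mono) (auto simp: indicator_def)

lemma path_prob_subadd:
  assumes \<theta>: "\<theta> \<in> states N" and N1: "N \<ge> 1" and \<phi>: "is_event N \<phi>"
    and \<phi>1: "is_event N \<phi>1" and \<phi>2: "is_event N \<phi>2"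
    and imp: "\<And>x. x \<in> space (obsN N) \<Longrightarrow> \<phi> x \<Longrightarrow> \<phi>1 x \<or> \<phi>2 x"
  shows "path_prob N \<theta> \<phi> \<le> path_prob N \<theta> \<phi>1 + path_prob N \<theta> \<phi>2"
proof -
  note int = integrable_hmm_dens_event[OF \<theta> N1]
  have "path_prob N \<theta> \<phi> \<le> (\<integral>x. hmm_dens p0 Q f N \<theta> x * indicator {y. \<phi>1 y} x
      + hmm_dens p0 Q f N \<theta> x * indicator {y. \<phi>2 y} x \<partial>obsN N)"
    unfolding path_prob_def using int[OF \<phi>] int[OF \<phi>1] int[OF \<phi>2] imp hmm_dens_nonneg[OF \<theta> N1]
    by (intro Bochner_Integration.integral_mono Bochner_Integration.integrable_add)
      (auto simp: indicator_def)
  also have "\<dots> = path_prob N \<theta> \<phi>1 + path_prob N \<theta> \<phi>2"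
    unfolding path_prob_def using int[OF \<phi>1] int[OF \<phi>2] by (rule Bochner_Integration.integral_add)
  finally show ?thesis .
qed

lemma path_prob_coord:
  assumes \<theta>: "\<theta> \<in> states N" and i: "i < N" and B: "B \<in> sets \<mu>"
  shows "path_prob N \<theta> (\<lambda>y. y i \<in> B) = path_weight N \<theta> * emission_prob (\<theta> i) B"
proof -
  have N1: "N \<ge> 1" using i by simp
  have "path_prob N \<theta> (\<lambda>y. y i \<in> B) = enn2real (\<integral>\<^sup>+x. ennreal (hmm_dens p0 Q f N \<theta> x * indicator {y. y i \<in> B} x) \<partial>obsN N)"
    unfolding path_prob_def
    by (rule integral_eq_nn_integral) (use integrable_hmm_dens_event[OF \<theta> N1 is_event_coord[OF i B]] hmm_dens_nonneg[OF \<theta> N1] in auto)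
  also have "\<dots> = enn2real (ennreal (path_weight N \<theta>) * ennreal (emission_prob (\<theta> i) B))"
    using nn_integral_hmm_dens_coord[OF \<theta> i B] emission_eq_emission_prob states_memD[OF \<theta> i] by simp
  also have "\<dots> = path_weight N \<theta> * emission_prob (\<theta> i) B"
    using path_weight_nonneg[OF \<theta> N1] emission_prob_nonneg by (simp add: enn2real_mult)
  finally show ?thesis .
qed

lemma path_prob_le_weight:
  assumes \<theta>: "\<theta> \<in> states N" and N1: "N \<ge> 1" and \<phi>: "is_event N \<phi>"
  shows "path_prob N \<theta> \<phi> \<le> path_weight N \<theta>"
proof -
  have i: "0 < N" using N1 by simp
  have "path_prob N \<theta> \<phi> \<le> path_prob N \<theta> (\<lambda>y. y 0 \<in> space \<mu>)"
    by (rule path_prob_mono[OF \<theta> N1 \<phi> is_event_coord[OF i sets.top]]) (use obs_space_component i in auto)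
  also have "\<dots> = path_weight N \<theta>" using path_prob_coord[OF \<theta> i sets.top] emission_prob_space states_memD[OF \<theta> i] by simp
  finally show ?thesis .
qed

lemma sum_path_prob_le:
  assumes S0: "S0 \<subseteq> states N" and S1: "S1 \<subseteq> states N" and N1: "N \<ge> 1" and \<phi>: "is_event N \<phi>"
    and C: "0 \<le> C"
    and dom: "\<And>x. x \<in> space (obsN N) \<Longrightarrow> \<phi> x \<Longrightarrow>
        (\<Sum>\<theta>\<in>S1. hmm_dens p0 Q f N \<theta> x) \<le> C * (\<Sum>\<theta>\<in>S0. hmm_dens p0 Q f N \<theta> x)"
  shows "(\<Sum>\<theta>\<in>S1. path_prob N \<theta> \<phi>) \<le> C * (\<Sum>\<theta>\<in>S0. path_prob N \<theta> \<phi>)"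
proof -
  have int0: "integrable (obsN N) (\<lambda>x. hmm_dens p0 Q f N \<theta> x * indicator {y. \<phi> y} x)" if "\<theta> \<in> S0" for \<theta>
    using integrable_hmm_dens_event[OF _ N1 \<phi>] S0 that by blast
  have int1: "integrable (obsN N) (\<lambda>x. hmm_dens p0 Q f N \<theta> x * indicator {y. \<phi> y} x)" if "\<theta> \<in> S1" for \<theta>
    using integrable_hmm_dens_event[OF _ N1 \<phi>] S1 that by blast
  have "(\<Sum>\<theta>\<in>S1. path_prob N \<theta> \<phi>) = (\<integral>x. (\<Sum>\<theta>\<in>S1. hmm_dens p0 Q f N \<theta> x * indicator {y. \<phi> y} x) \<partial>obsN N)"
    unfolding path_prob_def by (rule Bochner_Integration.integral_sum[symmetric]) (rule int1)
  also have "\<dots> \<le> (\<integral>x. C * (\<Sum>\<theta>\<in>S0. hmm_dens p0 Q f N \<theta> x * indicator {y. \<phi> y} x) \<partial>obsN N)"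
  proof (rule Bochner_Integration.integral_mono)
    show "integrable (obsN N) (\<lambda>x. \<Sum>\<theta>\<in>S1. hmm_dens p0 Q f N \<theta> x * indicator {y. \<phi> y} x)"
      by (rule Bochner_Integration.integrable_sum) (rule int1)
    show "integrable (obsN N) (\<lambda>x. C * (\<Sum>\<theta>\<in>S0. hmm_dens p0 Q f N \<theta> x * indicator {y. \<phi> y} x))"
      by (intro Bochner_Integration.integrable_mult_right Bochner_Integration.integrable_sum) (rule int0)
    fix x assume x: "x \<in> space (obsN N)"
    show "(\<Sum>\<theta>\<in>S1. hmm_dens p0 Q f N \<theta> x * indicator {y. \<phi> y} x)
      \<le> C * (\<Sum>\<theta>\<in>S0. hmm_dens p0 Q f N \<theta> x * indicator {y. \<phi> y} x)"
      using dom[OF x] by (cases "\<phi> x") (auto simp: indicator_def)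
  qed
  also have "\<dots> = C * (\<integral>x. (\<Sum>\<theta>\<in>S0. hmm_dens p0 Q f N \<theta> x * indicator {y. \<phi> y} x) \<partial>obsN N)"
    by (rule Bochner_Integration.integral_mult_right) (intro Bochner_Integration.integrable_sum int0)
  also have "\<dots> = C * (\<Sum>\<theta>\<in>S0. path_prob N \<theta> \<phi>)"
    unfolding path_prob_def by (subst Bochner_Integration.integral_sum) (auto intro: int0)
  finally show ?thesis .
qed

lemma hmm_dens_le_flip:
  assumes \<theta>: "\<theta> \<in> states N" and i: "i < N" and k: "k \<in> {0,1}" and c: "0 \<le> c"
    and le: "f (\<theta> i) (x i) \<le> c * f k (x i)"
  shows "hmm_dens p0 Q f N \<theta> x \<le> flip_bound * c * hmm_dens p0 Q f N (\<theta>(i := k)) x"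
proof -
  have N: "N \<ge> 1" using i by simp
  define R where "R = (\<Prod>n\<in>{..<N} - {i}. f (\<theta> n) (x n))"
  have R: "0 \<le> R" unfolding R_def using f_nonneg states_memD[OF \<theta>] by (intro prod_nonneg) auto
  have R': "(\<Prod>n\<in>{..<N} - {i}. f ((\<theta>(i := k)) n) (x n)) = R"
    unfolding R_def by (rule prod.cong) auto
  have dens: "hmm_dens p0 Q f N \<theta> x = path_weight N \<theta> * (f (\<theta> i) (x i) * R)"
    "hmm_dens p0 Q f N (\<theta>(i := k)) x = path_weight N (\<theta>(i := k)) * (f k (x i) * R)"
    unfolding hmm_dens_eq R_def[symmetric] R'[symmetric]
    using prod.remove[of "{..<N}" i "\<lambda>n. f (\<theta> n) (x n)"]
      prod.remove[of "{..<N}" i "\<lambda>n. f ((\<theta>(i := k)) n) (x n)"] i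
    by simp_all
  have "path_weight N \<theta> * (f (\<theta> i) (x i) * R)
      \<le> (flip_bound * path_weight N (\<theta>(i := k))) * ((c * f k (x i)) * R)"
    using path_weight_le_flip[OF \<theta> i k] path_weight_nonneg[OF \<theta> N] le R c flip_bound_pos
      f_nonneg[of "\<theta> i"] f_nonneg[of k] states_memD[OF \<theta> i] k
      path_weight_nonneg[OF states_fun_upd[OF \<theta> i k] N]
    by (intro mult_mono mult_right_mono mult_nonneg_nonneg) auto
  then show ?thesis unfolding dens by (simp add: mult_ac)
qed

lemma sum_hmm_dens_flip_le:
  assumes i: "i < N" and jk: "j \<in> {0,1}" "k \<in> {0,1}" and c: "0 \<le> c"
    and le: "f j (x i) \<le> c * f k (x i)"
  shows "(\<Sum>\<theta>\<in>{\<theta>\<in>states N. \<theta> i = j}. hmm_dens p0 Q f N \<theta> x)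
    \<le> flip_bound * c * (\<Sum>\<theta>\<in>{\<theta>\<in>states N. \<theta> i = k}. hmm_dens p0 Q f N \<theta> x)"
proof -
  define A where "A = {\<theta>\<in>states N. \<theta> i = j}"
  define B where "B = {\<theta>\<in>states N. \<theta> i = k}"
  have reindex: "(\<Sum>\<theta>\<in>A. hmm_dens p0 Q f N (\<theta>(i := k)) x) = (\<Sum>\<theta>\<in>B. hmm_dens p0 Q f N \<theta> x)"
  proof (rule sum.reindex_bij_witness[of _ "\<lambda>\<theta>. \<theta>(i := j)" "\<lambda>\<theta>. \<theta>(i := k)"])
    show "\<theta>(i := k, i := j) = \<theta>" "\<theta>(i := k) \<in> B" if "\<theta> \<in> A" for \<theta>
      using that states_fun_upd[of \<theta> N i k] i jk unfolding A_def B_def by auto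
    show "\<theta>(i := j, i := k) = \<theta>" "\<theta>(i := j) \<in> A" if "\<theta> \<in> B" for \<theta>
      using that states_fun_upd[of \<theta> N i j] i jk unfolding A_def B_def by auto
  qed simp
  have "(\<Sum>\<theta>\<in>A. hmm_dens p0 Q f N \<theta> x) \<le> (\<Sum>\<theta>\<in>A. flip_bound * c * hmm_dens p0 Q f N (\<theta>(i := k)) x)"
    using hmm_dens_le_flip[OF _ i jk(2) c] le by (intro sum_mono) (auto simp: A_def)
  also have "\<dots> = flip_bound * c * (\<Sum>\<theta>\<in>B. hmm_dens p0 Q f N \<theta> x)"
    unfolding reindex[symmetric] by (rule sum_distrib_left[symmetric])
  finally show ?thesis unfolding A_def B_def .
qed

definition state_prob :: "nat \<Rightarrow> nat \<Rightarrow> nat \<Rightarrow> ((nat \<Rightarrow> real) \<Rightarrow> bool) \<Rightarrow> real" where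
  "state_prob N i a \<phi> = (\<Sum>\<theta>\<in>states N. if \<theta> i = a then path_prob N \<theta> \<phi> else 0)"

lemma state_prob_filter: "state_prob N i a \<phi> = (\<Sum>\<theta>\<in>{\<theta>\<in>states N. \<theta> i = a}. path_prob N \<theta> \<phi>)"
  unfolding state_prob_def by (rule sum.inter_filter[symmetric, OF finite_states])

lemma state_prob_nonneg: "N \<ge> 1 \<Longrightarrow> 0 \<le> state_prob N i a \<phi>"
  unfolding state_prob_def by (rule sum_nonneg) (auto intro: path_prob_nonneg)

lemma state_prob_le: assumes i: "i < N" and a: "a \<in> {0,1}" and \<phi>: "is_event N \<phi>"
  shows "state_prob N i a \<phi> \<le> p0 a"
proof -
  have N1: "N \<ge> 1" using i by simp
  have "state_prob N i a \<phi> \<le> (\<Sum>\<theta>\<in>states N. if \<theta> i = a then path_weight N \<theta> else 0)"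
    unfolding state_prob_def by (rule sum_mono) (auto intro: path_prob_le_weight[OF _ N1 \<phi>])
  also have "\<dots> = p0 a" by (rule sum_path_weight_state[OF i a])
  finally show ?thesis .
qed

lemma state_prob_mono:
  assumes N1: "N \<ge> 1" and \<phi>: "is_event N \<phi>" and \<phi>': "is_event N \<phi>'"
    and imp: "\<And>x. x \<in> space (obsN N) \<Longrightarrow> \<phi> x \<Longrightarrow> \<phi>' x"
  shows "state_prob N i a \<phi> \<le> state_prob N i a \<phi>'"
  unfolding state_prob_def by (rule sum_mono) (auto intro: path_prob_mono[OF _ N1 \<phi> \<phi>' imp])

lemma state_prob_subadd:
  assumes N1: "N \<ge> 1" and \<phi>: "is_event N \<phi>" and \<phi>1: "is_event N \<phi>1" and \<phi>2: "is_event N \<phi>2"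
    and imp: "\<And>x. x \<in> space (obsN N) \<Longrightarrow> \<phi> x \<Longrightarrow> \<phi>1 x \<or> \<phi>2 x"
  shows "state_prob N i a \<phi> \<le> state_prob N i a \<phi>1 + state_prob N i a \<phi>2"
  unfolding state_prob_def sum.distrib[symmetric]
  by (rule sum_mono) (auto intro: path_prob_subadd[OF _ N1 \<phi> \<phi>1 \<phi>2 imp])

lemma state_prob_coord:
  assumes i: "i < N" and a: "a \<in> {0,1}" and B: "B \<in> sets \<mu>"
  shows "state_prob N i a (\<lambda>y. y i \<in> B) = p0 a * emission_prob a B"
proof -
  have "state_prob N i a (\<lambda>y. y i \<in> B) = (\<Sum>\<theta>\<in>states N. (if \<theta> i = a then path_weight N \<theta> else 0) * emission_prob a B)"
    unfolding state_prob_def by (rule sum.cong) (auto simp: path_prob_coord[OF _ i B])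
  also have "\<dots> = p0 a * emission_prob a B" by (simp add: sum_distrib_right[symmetric] sum_path_weight_state[OF i a])
  finally show ?thesis .
qed

lemma state_prob_flip_le:
  assumes i: "i < N" and jk: "j \<in> {0,1}" "k \<in> {0,1}" and c: "0 \<le> c"
    and \<phi>: "is_event N \<phi>"
    and le: "\<And>x. x \<in> space (obsN N) \<Longrightarrow> \<phi> x \<Longrightarrow> f j (x i) \<le> c * f k (x i)"
  shows "state_prob N i j \<phi> \<le> flip_bound * c * state_prob N i k \<phi>"
  unfolding state_prob_filter
proof (rule sum_path_prob_le[OF _ _ _ \<phi>])
  fix x assume x: "x \<in> space (obsN N)" "\<phi> x"
  show "(\<Sum>\<theta>\<in>{\<theta>\<in>states N. \<theta> i = j}. hmm_dens p0 Q f N \<theta> x)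
    \<le> flip_bound * c * (\<Sum>\<theta>\<in>{\<theta>\<in>states N. \<theta> i = k}. hmm_dens p0 Q f N \<theta> x)"
    by (rule sum_hmm_dens_flip_le[where x=x, OF i jk c le[OF x]])
qed (use i c flip_bound_pos in auto)

section \<open>Expected numbers of discoveries\<close>

abbreviation "exp_false N \<psi> \<equiv> (\<Sum>i<N. state_prob N i 0 (\<lambda>y. \<psi> y i))"
abbreviation "exp_true N \<psi> \<equiv> (\<Sum>i<N. state_prob N i 1 (\<lambda>y. \<psi> y i))"

lemma exp_count_single: "exp_count disc p0 Q f N \<psi> {a} = (\<Sum>i<N. state_prob N i a (\<lambda>y. \<psi> y i))"
  unfolding exp_count_def state_prob_def path_prob_def by simp

lemma exp_count_both: "exp_count disc p0 Q f N \<psi> {0,1} = exp_false N \<psi> + exp_true N \<psi>"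
  unfolding exp_count_def state_prob_def path_prob_def sum.distrib[symmetric]
  by (intro sum.cong refl) (auto dest: states_memD)

lemma is_mtp_event: "is_mtp disc N \<psi> \<Longrightarrow> i < N \<Longrightarrow> is_event N (\<lambda>y. \<psi> y i)"
  unfolding is_mtp_def by blast

lemma exp_false_nonneg: "N \<ge> 1 \<Longrightarrow> 0 \<le> exp_false N \<psi>" by (intro sum_nonneg state_prob_nonneg)
lemma exp_true_nonneg: "N \<ge> 1 \<Longrightarrow> 0 \<le> exp_true N \<psi>" by (intro sum_nonneg state_prob_nonneg)

lemma p1_pos: "0 < p0 1" using p0_pos by simp

lemma exp_state_le:
  assumes \<psi>: "is_mtp disc N \<psi>" and a: "a \<in> {0,1}"
  shows "(\<Sum>i<N. state_prob N i a (\<lambda>y. \<psi> y i)) \<le> real N * p0 a"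
proof -
  have "(\<Sum>i<N. state_prob N i a (\<lambda>y. \<psi> y i)) \<le> (\<Sum>i<N. p0 a)"
    using a by (intro sum_mono state_prob_le is_mtp_event[OF \<psi>]) auto
  then show ?thesis by simp
qed

lemma exp_disc_le:
  assumes \<psi>: "is_mtp disc N \<psi>"
  shows "exp_false N \<psi> + exp_true N \<psi> \<le> real N"
proof -
  have "real N * p0 0 + real N * p0 1 = real N" using p0_sum by (simp add: distrib_left[symmetric])
  then show ?thesis using exp_state_le[OF \<psi>, of 0] exp_state_le[OF \<psi>, of 1] by simp
qed

lemma exp_count_all_true:
  assumes N1: "N \<ge> 1"
  shows "exp_count disc p0 Q f N (\<lambda>_ _. True) {1} = real N * p0 1"
proof -
  have "state_prob N i 1 (\<lambda>_. True) = p0 1" if i: "i < N" for i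
  proof -
    have P: "is_event N (\<lambda>y. y i \<in> space \<mu>)" by (rule is_event_coord[OF i sets.top])
    have "state_prob N i 1 (\<lambda>_. True) \<le> state_prob N i 1 (\<lambda>y. y i \<in> space \<mu>)"
      by (rule state_prob_mono[OF N1 measurable_const P]) (use obs_space_component i in auto)
    moreover have "state_prob N i 1 (\<lambda>y. y i \<in> space \<mu>) \<le> state_prob N i 1 (\<lambda>_. True)"
      by (rule state_prob_mono[OF N1 P measurable_const]) auto
    moreover have "state_prob N i 1 (\<lambda>y. y i \<in> space \<mu>) = p0 1"
      using state_prob_coord[OF i _ sets.top, of 1] emission_prob_space[of 1] by simp
    ultimately show ?thesis by simp
  qed
  then show ?thesis unfolding exp_count_single by simp
qed

lemma mTDR_eq: "N \<ge> 1 \<Longrightarrow> mTDR disc p0 Q f N \<psi> = exp_true N \<psi> / (real N * p0 1)"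
  using exp_count_all_true[of N] by (simp add: mTDR_def exp_count_single)

lemma mFDR_eq: "mFDR disc p0 Q f N \<psi> = exp_false N \<psi> / (exp_false N \<psi> + exp_true N \<psi>)"
  unfolding mFDR_def exp_count_both exp_count_single by simp

text \<open>\<open>fdr_excess N x \<psi> \<le> 0\<close> is the constraint \<open>mFDR \<le> x\<close> with the denominator cleared.\<close>

definition col_excess :: "nat \<Rightarrow> real \<Rightarrow> nat \<Rightarrow> ((nat \<Rightarrow> real) \<Rightarrow> bool) \<Rightarrow> real" where
  "col_excess N x i \<phi> = state_prob N i 0 \<phi> - x * (state_prob N i 0 \<phi> + state_prob N i 1 \<phi>)"

definition fdr_excess :: "nat \<Rightarrow> real \<Rightarrow> ((nat \<Rightarrow> real) \<Rightarrow> nat \<Rightarrow> bool) \<Rightarrow> real" where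
  "fdr_excess N x \<psi> = (\<Sum>i<N. col_excess N x i (\<lambda>y. \<psi> y i))"

lemma fdr_excess_eq: "fdr_excess N x \<psi> = exp_false N \<psi> - x * (exp_false N \<psi> + exp_true N \<psi>)"
  unfolding fdr_excess_def col_excess_def
  by (simp add: sum_subtractf sum_distrib_left[symmetric] sum.distrib)

lemma mFDR_le_iff:
  assumes "N \<ge> 1" "0 \<le> x"
  shows "mFDR disc p0 Q f N \<psi> \<le> x \<longleftrightarrow> fdr_excess N x \<psi> \<le> 0"
proof -
  have v: "0 \<le> exp_false N \<psi>" and t: "0 \<le> exp_true N \<psi>"
    using exp_false_nonneg exp_true_nonneg assms by auto
  show ?thesis
  proof (cases "exp_false N \<psi> + exp_true N \<psi> = 0")
    case True
    then show ?thesis using v t assms unfolding mFDR_eq fdr_excess_eq by simp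
  next
    case False
    then have "exp_false N \<psi> + exp_true N \<psi> > 0" using v t by simp
    then show ?thesis unfolding mFDR_eq fdr_excess_eq by (simp add: divide_le_eq mult.commute)
  qed
qed

lemma exp_false_le:
  assumes N: "N \<ge> 1" and x: "0 \<le> x" and \<psi>: "is_mtp disc N \<psi>" "mFDR disc p0 Q f N \<psi> \<le> x"
  shows "exp_false N \<psi> \<le> x * real N"
proof -
  have "exp_false N \<psi> \<le> x * (exp_false N \<psi> + exp_true N \<psi>)"
    using \<psi> mFDR_le_iff[OF N x] by (simp add: fdr_excess_eq)
  also have "\<dots> \<le> x * real N"
    using exp_disc_le[OF \<psi>(1)] x by (intro mult_left_mono)
  finally show ?thesis .
qed

abbreviation "opt N x \<equiv> opt_TDR disc p0 Q f N x"
abbreviation "feasible N x \<equiv> {\<psi>. is_mtp disc N \<psi> \<and> mFDR disc p0 Q f N \<psi> \<le> x}"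

lemma never_reject_feasible:
  assumes N: "N \<ge> 1" and x: "0 \<le> x"
  shows "(\<lambda>_ _. False) \<in> feasible N x"
proof -
  have "path_prob N \<theta> (\<lambda>_. False) = 0" for \<theta>
    unfolding path_prob_def by simp
  then have "state_prob N i a (\<lambda>_. False) = 0" for i a
    by (simp add: state_prob_filter)
  then show ?thesis
    using mFDR_le_iff[OF N x] by (simp add: is_mtp_def fdr_excess_def col_excess_def)
qed

lemma mTDR_le_one: "N \<ge> 1 \<Longrightarrow> is_mtp disc N \<psi> \<Longrightarrow> mTDR disc p0 Q f N \<psi> \<le> 1"
  unfolding mTDR_eq using exp_state_le[of N \<psi> 1] p1_pos by (simp add: divide_le_eq)

lemma mTDR_le_opt: "N \<ge> 1 \<Longrightarrow> \<psi> \<in> feasible N x \<Longrightarrow> mTDR disc p0 Q f N \<psi> \<le> opt N x"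
  unfolding opt_TDR_def
  by (rule cSup_upper) (auto intro!: bdd_aboveI[of _ 1] mTDR_le_one)

lemma opt_le:
  "N \<ge> 1 \<Longrightarrow> 0 \<le> x \<Longrightarrow> (\<And>\<psi>. \<psi> \<in> feasible N x \<Longrightarrow> mTDR disc p0 Q f N \<psi> \<le> b) \<Longrightarrow> opt N x \<le> b"
  unfolding opt_TDR_def
  by (rule cSup_least) (use never_reject_feasible in auto)

lemma opt_mono: "N \<ge> 1 \<Longrightarrow> 0 \<le> x \<Longrightarrow> x \<le> y \<Longrightarrow> opt N x \<le> opt N y"
  by (rule opt_le) (auto intro: mTDR_le_opt)

lemma mTDR_le_opt_plus:
  assumes N: "N \<ge> 1" and \<psi>': "\<psi>' \<in> feasible N x"
    and true: "exp_true N \<psi> \<le> exp_true N \<psi>' + r * p0 1"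
  shows "mTDR disc p0 Q f N \<psi> \<le> opt N x + r / real N"
proof -
  have "mTDR disc p0 Q f N \<psi> \<le> (exp_true N \<psi>' + r * p0 1) / (real N * p0 1)"
    unfolding mTDR_eq[OF N] using N p1_pos true by (intro divide_right_mono) auto
  also have "\<dots> = mTDR disc p0 Q f N \<psi>' + r / real N"
    unfolding mTDR_eq[OF N] using N p1_pos by (simp add: add_divide_distrib)
  finally show ?thesis using mTDR_le_opt[OF N \<psi>'] by simp
qed

section \<open>Regions of the likelihood ratio\<close>

lemma f0_measurable[measurable]: "f 0 \<in> borel_measurable \<mu>"
  and f1_measurable[measurable]: "f 1 \<in> borel_measurable \<mu>"
  using f_measurable by simp_all

text \<open>Level sets of the likelihood ratio \<open>f 1 / f 0\<close>; the suffix \<open>fin\<close> marks the restriction to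
  points where the ratio is finite.\<close>

definition "LR_gt M = {z\<in>space \<mu>. M * f 0 z < f 1 z}"
definition "LR_le t = {z\<in>space \<mu>. f 1 z \<le> t * f 0 z}"
definition "LR_ge_fin M = {z\<in>space \<mu>. 0 < f 0 z \<and> M * f 0 z \<le> f 1 z}"
definition "LR_lt_fin M = {z\<in>space \<mu>. 0 < f 0 z \<and> f 1 z < M * f 0 z}"
definition "f0_null = {z\<in>space \<mu>. f 0 z = 0}"

lemma LR_gt_sets[measurable]: "LR_gt M \<in> sets \<mu>"
  and LR_le_sets[measurable]: "LR_le t \<in> sets \<mu>"
  and LR_ge_fin_sets[measurable]: "LR_ge_fin M \<in> sets \<mu>"
  and LR_lt_fin_sets[measurable]: "LR_lt_fin M \<in> sets \<mu>"
  and f0_null_sets[measurable]: "f0_null \<in> sets \<mu>"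
  unfolding LR_gt_def LR_le_def LR_ge_fin_def LR_lt_fin_def f0_null_def by measurable

lemma LR_le_iff:
  assumes t: "0 \<le> t"
  shows "LR f y \<le> ereal t \<longleftrightarrow> f 1 y \<le> t * f 0 y"
proof (cases "f 0 y = 0")
  case True
  then show ?thesis using t f_nonneg[of 1 y] unfolding LR_def by auto
next
  case False
  then have "0 < f 0 y" using f_nonneg[of 0 y] by simp
  then show ?thesis using False unfolding LR_def by (simp add: pos_divide_le_eq)
qed

lemma LR_cdf_eq:
  assumes "0 \<le> t"
  shows "LR_cdf disc p0 f t = p0 0 * emission_prob 0 (LR_le t) + p0 1 * emission_prob 1 (LR_le t)"
proof -
  have "(\<integral>\<^sup>+ x. ennreal (f j x) * indicator {y. LR f y \<le> ereal t} x \<partial>\<mu>) = emission j (LR_le t)" for j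
    unfolding emission_def
    by (intro nn_integral_cong) (auto simp: LR_le_def indicator_def LR_le_iff[OF assms])
  then show ?thesis unfolding LR_cdf_def emission_prob_def by simp
qed

lemma emission_prob_LR_le:
  assumes j: "j \<in> {0,1}"
  shows "emission_prob j (LR_le t) = 1 - emission_prob j (LR_gt t)"
proof -
  have "emission j (LR_le t) + emission j (LR_gt t)
      = (\<integral>\<^sup>+z. ennreal (f j z) * indicator (LR_le t) z + ennreal (f j z) * indicator (LR_gt t) z \<partial>\<mu>)"
    unfolding emission_def using j by (intro nn_integral_add[symmetric]) auto
  also have "\<dots> = (\<integral>\<^sup>+z. ennreal (f j z) \<partial>\<mu>)"
    by (intro nn_integral_cong) (auto simp: indicator_def LR_le_def LR_gt_def)
  finally have "ennreal (emission_prob j (LR_le t)) + ennreal (emission_prob j (LR_gt t)) = 1"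
    using nn_integral_f[OF j] emission_eq_emission_prob[OF j] by simp
  then have "ennreal (emission_prob j (LR_le t) + emission_prob j (LR_gt t)) = 1"
    by (simp only: ennreal_plus[OF emission_prob_nonneg emission_prob_nonneg])
  then show ?thesis by (simp only: ennreal_eq_1)
qed

lemma emission_LR_gt_le:
  assumes M: "0 < M"
  shows "emission 0 (LR_gt M) \<le> ennreal (1 / M) * emission 1 (LR_gt M)"
proof -
  have "ennreal (f 0 z) * indicator (LR_gt M) z \<le> ennreal (1 / M) * (ennreal (f 1 z) * indicator (LR_gt M) z)"
    for z
  proof (cases "z \<in> LR_gt M")
    case True
    then have "f 0 z \<le> 1 / M * f 1 z" using M unfolding LR_gt_def by (simp add: field_simps)
    then have "ennreal (f 0 z) \<le> ennreal (1 / M * f 1 z)" by (rule ennreal_leI)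
    also have "\<dots> = ennreal (1 / M) * ennreal (f 1 z)" using M f_nonneg[of 1 z] by (intro ennreal_mult) auto
    finally show ?thesis using True by simp
  qed simp
  then have "emission 0 (LR_gt M) \<le> (\<integral>\<^sup>+ z. ennreal (1 / M) * (ennreal (f 1 z) * indicator (LR_gt M) z) \<partial>\<mu>)"
    unfolding emission_def by (intro nn_integral_mono)
  also have "\<dots> = ennreal (1 / M) * emission 1 (LR_gt M)"
    unfolding emission_def by (rule nn_integral_cmult) measurable
  finally show ?thesis .
qed

lemma integrable_f1: "integrable \<mu> (f 1)"
  by (rule integrableI_nonneg) (use f_nonneg nn_integral_f in auto)

lemma emission_prob_eq_integral:
  assumes j: "j \<in> {0,1}" and B: "B \<in> sets \<mu>"
  shows "emission_prob j B = (\<integral>z. f j z * indicator B z \<partial>\<mu>)"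
proof -
  have [measurable]: "f j \<in> borel_measurable \<mu>" using f_measurable j by simp
  have "(\<integral>z. f j z * indicator B z \<partial>\<mu>) = enn2real (\<integral>\<^sup>+ z. ennreal (f j z * indicator B z) \<partial>\<mu>)"
    by (rule integral_eq_nn_integral) (use B f_nonneg j in auto)
  also have "(\<integral>\<^sup>+ z. ennreal (f j z * indicator B z) \<partial>\<mu>) = emission j B"
    unfolding emission_def by (intro nn_integral_cong) (auto simp: indicator_def)
  finally show ?thesis unfolding emission_prob_def by simp
qed

lemma LIMSEQ_emission_prob_LR_ge_fin: "(\<lambda>n. emission_prob 1 (LR_ge_fin (real n))) \<longlonglongrightarrow> 0"
proof -
  define s where "s = (\<lambda>n::nat. \<lambda>z. f 1 z * indicator (LR_ge_fin (real n)) z)"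
  have vanish: "\<forall>\<^sub>F n in sequentially. s n z = 0" for z
  proof (cases "0 < f 0 z")
    case True
    obtain n0 :: nat where n0: "f 1 z / f 0 z < real n0" using reals_Archimedean2 by blast
    have "s n z = 0" if "n0 \<le> n" for n
    proof -
      have "f 1 z / f 0 z < real n" using n0 that by linarith
      then show ?thesis using True by (simp add: s_def LR_ge_fin_def pos_divide_less_eq)
    qed
    then show ?thesis unfolding eventually_sequentially by blast
  next
    case False
    then show ?thesis unfolding s_def LR_ge_fin_def by auto
  qed
  have "(\<lambda>n. integral\<^sup>L \<mu> (s n)) \<longlonglongrightarrow> integral\<^sup>L \<mu> (\<lambda>z. 0::real)"
  proof (rule integral_dominated_convergence[where w = "f 1"])
    show "s n \<in> borel_measurable \<mu>" for n unfolding s_def by measurable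
    show "AE z in \<mu>. (\<lambda>n. s n z) \<longlonglongrightarrow> 0"
      using vanish by (intro AE_I2 tendsto_eventually)
    show "AE z in \<mu>. norm (s n z) \<le> f 1 z" for n
      by (rule AE_I2) (use f_nonneg in \<open>auto simp: s_def indicator_def\<close>)
  qed (use integrable_f1 in auto)
  moreover have "emission_prob 1 (LR_ge_fin (real n)) = integral\<^sup>L \<mu> (s n)" for n
    unfolding s_def by (rule emission_prob_eq_integral) auto
  ultimately show ?thesis by simp
qed

lemma emission_prob_LR_ge_fin_small:
  assumes e: "0 < e"
  shows "\<exists>M>0. emission_prob 1 (LR_ge_fin M) \<le> e"
proof -
  obtain n0 where "\<And>n. n0 \<le> n \<Longrightarrow> emission_prob 1 (LR_ge_fin (real n)) < e"
    using order_tendstoD(2)[OF LIMSEQ_emission_prob_LR_ge_fin e] unfolding eventually_sequentially by blast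
  from this[of "Suc n0"] show ?thesis by (intro exI[of _ "real (Suc n0)"]) simp
qed

lemma state_prob_f0_null:
  assumes i: "i < N"
  shows "state_prob N i 0 (\<lambda>y. y i \<in> f0_null) = 0"
proof -
  have "state_prob N i 0 (\<lambda>y. y i \<in> f0_null) \<le> flip_bound * 0 * state_prob N i 1 (\<lambda>y. y i \<in> f0_null)"
    by (rule state_prob_flip_le[OF i _ _ _ is_event_coord[OF i f0_null_sets]]) (auto simp: f0_null_def)
  then show ?thesis using state_prob_nonneg[of N i 0 "\<lambda>y. y i \<in> f0_null"] i by simp
qed

lemma state_prob_true_le:
  assumes i: "i < N" and M: "0 < M" and \<phi>: "is_event N \<phi>"
  shows "state_prob N i 1 \<phi> \<le> state_prob N i 1 (\<lambda>y. y i \<in> f0_null)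
    + p0 1 * emission_prob 1 (LR_ge_fin M) + flip_bound * M * state_prob N i 0 \<phi>"
proof -
  have N: "N \<ge> 1" using i by simp
  have Z: "is_event N (\<lambda>y. y i \<in> f0_null)" by (rule is_event_coord[OF i f0_null_sets])
  have B: "is_event N (\<lambda>y. y i \<in> LR_ge_fin M)" by (rule is_event_coord[OF i LR_ge_fin_sets])
  have S: "is_event N (\<lambda>y. \<phi> y \<and> y i \<in> LR_lt_fin M)"
    by (rule pred_intros_logic(3)[OF \<phi> is_event_coord[OF i LR_lt_fin_sets]])
  have BS: "is_event N (\<lambda>y. y i \<in> LR_ge_fin M \<or> (\<phi> y \<and> y i \<in> LR_lt_fin M))"
    by (rule pred_intros_logic(5)[OF B S])
  have "state_prob N i 1 \<phi> \<le> state_prob N i 1 (\<lambda>y. y i \<in> f0_null)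
      + state_prob N i 1 (\<lambda>y. y i \<in> LR_ge_fin M \<or> (\<phi> y \<and> y i \<in> LR_lt_fin M))"
  proof (rule state_prob_subadd[OF N \<phi> Z BS])
    fix x
    assume "x \<in> space (obsN N)" "\<phi> x"
    then show "x i \<in> f0_null \<or> x i \<in> LR_ge_fin M \<or> (\<phi> x \<and> x i \<in> LR_lt_fin M)"
      using obs_space_component[of x N i] i f_nonneg[of 0 "x i"]
      unfolding f0_null_def LR_ge_fin_def LR_lt_fin_def by auto
  qed
  also have "state_prob N i 1 (\<lambda>y. y i \<in> LR_ge_fin M \<or> (\<phi> y \<and> y i \<in> LR_lt_fin M))
      \<le> state_prob N i 1 (\<lambda>y. y i \<in> LR_ge_fin M) + state_prob N i 1 (\<lambda>y. \<phi> y \<and> y i \<in> LR_lt_fin M)"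
    by (rule state_prob_subadd[OF N BS B S]) auto
  also have "state_prob N i 1 (\<lambda>y. y i \<in> LR_ge_fin M) = p0 1 * emission_prob 1 (LR_ge_fin M)"
    using state_prob_coord[OF i _ LR_ge_fin_sets, of 1] by simp
  also have "state_prob N i 1 (\<lambda>y. \<phi> y \<and> y i \<in> LR_lt_fin M)
      \<le> flip_bound * M * state_prob N i 0 (\<lambda>y. \<phi> y \<and> y i \<in> LR_lt_fin M)"
    by (rule state_prob_flip_le[OF i _ _ _ S]) (use M in \<open>auto simp: LR_lt_fin_def\<close>)
  also have "state_prob N i 0 (\<lambda>y. \<phi> y \<and> y i \<in> LR_lt_fin M) \<le> state_prob N i 0 \<phi>"
    by (rule state_prob_mono[OF N S \<phi>]) auto
  finally show ?thesis using flip_bound_pos M by (simp add: mult_left_mono)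
qed

section \<open>Increments of the optimal true discovery rate\<close>

lemma f0_null_test_feasible:
  assumes N: "N \<ge> 1"
  shows "(\<lambda>y i. y i \<in> f0_null) \<in> feasible N 0"
proof -
  have "exp_false N (\<lambda>y i. y i \<in> f0_null) = 0"
    by (intro sum.neutral) (simp add: state_prob_f0_null)
  moreover have "is_mtp disc N (\<lambda>y i. y i \<in> f0_null)"
    unfolding is_mtp_def by (auto intro: is_event_coord)
  ultimately show ?thesis using mFDR_le_iff[OF N, of 0] by (simp add: fdr_excess_eq)
qed

lemma exp_true_le_f0_null_test:
  assumes M: "0 < M" and \<psi>: "is_mtp disc N \<psi>"
  shows "exp_true N \<psi> \<le> exp_true N (\<lambda>y i. y i \<in> f0_null)
    + real N * (p0 1 * emission_prob 1 (LR_ge_fin M)) + flip_bound * M * exp_false N \<psi>"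
proof -
  have "exp_true N \<psi> \<le> (\<Sum>i<N. state_prob N i 1 (\<lambda>y. y i \<in> f0_null)
      + p0 1 * emission_prob 1 (LR_ge_fin M) + flip_bound * M * state_prob N i 0 (\<lambda>y. \<psi> y i))"
    using \<psi> M by (intro sum_mono state_prob_true_le is_mtp_event) auto
  then show ?thesis by (simp add: sum.distrib sum_distrib_left)
qed

text \<open>Tests that fire only where \<open>f 0\<close> vanishes make no false discoveries; up to \<open>e\<close>, every
  procedure with small enough mFDR is dominated by them, since the remaining true discoveries
  cost false ones at a bounded rate.\<close>

lemma opt_near_zero:
  assumes e: "0 < e"
  shows "\<exists>s>0. \<forall>N\<ge>1. opt N s \<le> opt N 0 + e"
proof -
  obtain M where M: "0 < M" "emission_prob 1 (LR_ge_fin M) \<le> e / 2"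
    using emission_prob_LR_ge_fin_small[of "e / 2"] e by auto
  define s where "s = e * p0 1 / (2 * flip_bound * M)"
  have s: "0 < s" unfolding s_def using e p1_pos flip_bound_pos M by simp
  have "opt N s \<le> opt N 0 + e" if N: "N \<ge> 1" for N
  proof (rule opt_le[OF N])
    show "0 \<le> s" using s by simp
    fix \<psi>
    assume \<psi>: "\<psi> \<in> feasible N s"
    then have mtp: "is_mtp disc N \<psi>" by simp
    have "flip_bound * M * exp_false N \<psi> \<le> flip_bound * M * (s * real N)"
      using exp_false_le[OF N, of s \<psi>] \<psi> s flip_bound_pos M by (intro mult_left_mono) auto
    also have "\<dots> = real N * (p0 1 * (e / 2))"
      unfolding s_def using flip_bound_pos M by (simp add: field_simps)
    finally have "flip_bound * M * exp_false N \<psi> \<le> real N * (p0 1 * (e / 2))" .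
    moreover have "real N * (p0 1 * emission_prob 1 (LR_ge_fin M)) \<le> real N * (p0 1 * (e / 2))"
      using M(2) p1_pos by (intro mult_left_mono) auto
    moreover have "(real N * e) * p0 1 = 2 * (real N * (p0 1 * (e / 2)))" by simp
    ultimately have "exp_true N \<psi> \<le> exp_true N (\<lambda>y i. y i \<in> f0_null) + (real N * e) * p0 1"
      using exp_true_le_f0_null_test[OF M(1) mtp] by linarith
    from mTDR_le_opt_plus[OF N f0_null_test_feasible[OF N] this]
    show "mTDR disc p0 Q f N \<psi> \<le> opt N 0 + e" using N by simp
  qed
  with s show ?thesis by blast
qed

lemma is_mtp_splice:
  assumes "is_mtp disc N \<phi>" and "is_mtp disc N \<psi>"
  shows "is_mtp disc N (splice S \<phi> \<psi>)"
proof -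
  have "(\<lambda>y. splice S \<phi> \<psi> y i) = (if i \<in> S then (\<lambda>y. \<phi> y i) else (\<lambda>y. \<psi> y i))" for i
    by (simp add: splice_def fun_eq_iff)
  then show ?thesis using assms unfolding is_mtp_def by simp
qed

lemma fdr_excess_splice:
  assumes "S \<subseteq> {..<N}"
  shows "fdr_excess N x (splice S \<phi> \<psi>) = fdr_excess N x \<psi>
    + (\<Sum>i\<in>S. col_excess N x i (\<lambda>y. \<phi> y i) - col_excess N x i (\<lambda>y. \<psi> y i))"
  unfolding fdr_excess_def by (rule sum_splice[OF assms finite_lessThan])

lemma splice_feasible:
  assumes N: "N \<ge> 1" and x: "0 \<le> x" and \<phi>: "is_mtp disc N \<phi>" and \<psi>: "is_mtp disc N \<psi>"
    and S: "S \<subseteq> {..<N}"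
    and margin: "\<And>i. i \<in> S \<Longrightarrow> col_excess N x i (\<lambda>y. \<phi> y i) \<le> - \<gamma>"
    and excess_S: "0 \<le> (\<Sum>i\<in>S. col_excess N x i (\<lambda>y. \<psi> y i))"
    and excess: "fdr_excess N x \<psi> \<le> \<gamma> * card S"
  shows "splice S \<phi> \<psi> \<in> feasible N x"
proof -
  have "(\<Sum>i\<in>S. col_excess N x i (\<lambda>y. \<phi> y i)) \<le> (\<Sum>i\<in>S. - \<gamma>)"
    using margin by (rule sum_mono)
  also have "\<dots> = - (\<gamma> * card S)" by (simp add: mult.commute)
  finally have "fdr_excess N x (splice S \<phi> \<psi>) \<le> 0"
    using excess excess_S unfolding fdr_excess_splice[OF S] sum_subtractf by linarith
  then show ?thesis using mFDR_le_iff[OF N x] is_mtp_splice[OF \<phi> \<psi>] by simp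
qed

lemma exp_true_le_splice:
  assumes N: "N \<ge> 1" and \<psi>: "is_mtp disc N \<psi>" and S: "S \<subseteq> {..<N}"
  shows "exp_true N \<psi> \<le> exp_true N (splice S \<phi> \<psi>) + card S * p0 1"
proof -
  have "(\<Sum>i\<in>S. - p0 1) \<le> (\<Sum>i\<in>S. state_prob N i 1 (\<lambda>y. \<phi> y i) - state_prob N i 1 (\<lambda>y. \<psi> y i))"
  proof (rule sum_mono)
    fix i
    assume "i \<in> S"
    then have "state_prob N i 1 (\<lambda>y. \<psi> y i) \<le> p0 1"
      using S by (intro state_prob_le is_mtp_event[OF \<psi>]) auto
    moreover have "0 \<le> state_prob N i 1 (\<lambda>y. \<phi> y i)" by (rule state_prob_nonneg[OF N])
    ultimately show "- p0 1 \<le> state_prob N i 1 (\<lambda>y. \<phi> y i) - state_prob N i 1 (\<lambda>y. \<psi> y i)"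
      by linarith
  qed
  then show ?thesis
    using sum_splice[OF S finite_lessThan, of "\<lambda>i. state_prob N i 1" \<phi> \<psi>] by simp
qed

text \<open>If some procedure has FDR-excess margin \<open>\<gamma>\<close> at every test, a procedure feasible at level
  \<open>x + d\<close> becomes feasible at level \<open>x\<close> after handing about \<open>d N / \<gamma>\<close> of its tests over to that
  procedure, which costs at most a fraction \<open>d / \<gamma> + 1 / N\<close> of the true discoveries.\<close>

lemma mTDR_le_opt_increment:
  assumes N: "2 \<le> N" and x: "0 \<le> x" and \<gamma>: "0 < \<gamma>" and d: "0 \<le> d" "d \<le> \<gamma> / 2"
    and \<phi>: "is_mtp disc N \<phi>" and margin: "\<And>i. i < N \<Longrightarrow> col_excess N x i (\<lambda>y. \<phi> y i) \<le> - \<gamma>"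
    and \<psi>: "\<psi> \<in> feasible N (x + d)"
  shows "mTDR disc p0 Q f N \<psi> \<le> opt N x + d / \<gamma> + 1 / real N"
proof -
  have N1: "N \<ge> 1" using N by simp
  have mtp: "is_mtp disc N \<psi>" using \<psi> by simp
  have "fdr_excess N (x + d) \<psi> \<le> 0" using \<psi> mFDR_le_iff[OF N1, of "x + d" \<psi>] x d by simp
  moreover have "d * (exp_false N \<psi> + exp_true N \<psi>) \<le> d * real N"
    using exp_disc_le[OF mtp] d by (intro mult_left_mono) auto
  ultimately have excess: "fdr_excess N x \<psi> \<le> d * real N"
    unfolding fdr_excess_eq by (simp add: algebra_simps)
  show ?thesis
  proof (cases "fdr_excess N x \<psi> \<le> 0")
    case True
    then have "mTDR disc p0 Q f N \<psi> \<le> opt N x"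
      using mFDR_le_iff[OF N1 x] mtp by (intro mTDR_le_opt[OF N1]) simp
    moreover have "0 \<le> d / \<gamma> + 1 / real N" using d \<gamma> by simp
    ultimately show ?thesis by linarith
  next
    case False
    define k where "k = nat \<lceil>d * real N / \<gamma>\<rceil>"
    have k: "real k = of_int \<lceil>d * real N / \<gamma>\<rceil>" unfolding k_def using d \<gamma> by simp
    then have "d * real N / \<gamma> \<le> real k" by simp
    then have k_ge: "d * real N \<le> \<gamma> * real k" using \<gamma> by (simp add: field_simps)
    have k_lt: "real k < d * real N / \<gamma> + 1" unfolding k by linarith
    have "d * real N \<le> \<gamma> / 2 * real N" using d(2) by (intro mult_right_mono) auto
    then have "d * real N / \<gamma> \<le> real N / 2" using \<gamma> by (simp add: field_simps)
    moreover have "2 \<le> real N" using N by simp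
    ultimately have "real k \<le> real N" using k_lt by linarith
    then have "k \<le> card {..<N}" by simp
    then obtain S where S: "S \<subseteq> {..<N}" "card S = k" "0 \<le> (\<Sum>i\<in>S. col_excess N x i (\<lambda>y. \<psi> y i))"
      using exists_subset_card_sum_nonneg[of "{..<N}" "\<lambda>i. col_excess N x i (\<lambda>y. \<psi> y i)"] False
      by (auto simp: fdr_excess_def)
    have "splice S \<phi> \<psi> \<in> feasible N x"
      using excess k_ge S margin by (intro splice_feasible[OF N1 x \<phi> mtp]) auto
    from mTDR_le_opt_plus[OF N1 this exp_true_le_splice[OF N1 mtp S(1)]]
    have "mTDR disc p0 Q f N \<psi> \<le> opt N x + real k / real N" using S(2) by simp
    also have "real k / real N \<le> d / \<gamma> + 1 / real N"
      using k_lt N1 by (simp add: field_simps)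
    finally show ?thesis by simp
  qed
qed

lemma col_excess_LR_gt_le:
  assumes i: "i < N" and M: "0 < M" and x: "0 \<le> x"
  shows "col_excess N x i (\<lambda>y. y i \<in> LR_gt M) \<le> (flip_bound / M - x) * (p0 1 * emission_prob 1 (LR_gt M))"
proof -
  let ?E = "\<lambda>y. y i \<in> LR_gt M"
  have t: "state_prob N i 1 ?E = p0 1 * emission_prob 1 (LR_gt M)"
    using state_prob_coord[OF i _ LR_gt_sets, of 1] by simp
  have v: "state_prob N i 0 ?E \<le> flip_bound * (1 / M) * state_prob N i 1 ?E"
  proof (rule state_prob_flip_le[OF i _ _ _ is_event_coord[OF i LR_gt_sets]])
    fix y
    assume "y \<in> space (obsN N)" "y i \<in> LR_gt M"
    then show "f 0 (y i) \<le> 1 / M * f 1 (y i)" using M unfolding LR_gt_def by (simp add: field_simps)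
  qed (use M in auto)
  have "0 \<le> x * state_prob N i 0 ?E" using x i state_prob_nonneg[of N] by simp
  then have "col_excess N x i ?E \<le> state_prob N i 0 ?E - x * state_prob N i 1 ?E"
    unfolding col_excess_def by (simp add: algebra_simps)
  also have "\<dots> \<le> flip_bound * (1 / M) * state_prob N i 1 ?E - x * state_prob N i 1 ?E"
    using v by simp
  also have "\<dots> = (flip_bound / M - x) * (p0 1 * emission_prob 1 (LR_gt M))"
    unfolding t by (simp add: algebra_simps)
  finally show ?thesis .
qed

end

locale two_state_hmm_LR = two_state_hmm +
  assumes cdf_mono: "strict_mono_on {0..} (LR_cdf disc p0 f)"
begin

text \<open>If \<open>f 1 / f 0 > M\<close> had no mass, the distribution function of the likelihood ratio would
  already reach 1 at \<open>M\<close>, contradicting strict monotonicity.\<close>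

lemma emission_prob_LR_gt_pos:
  assumes M: "0 < M"
  shows "0 < emission_prob 1 (LR_gt M)"
proof (rule ccontr)
  assume "\<not> ?thesis"
  then have gt1: "emission_prob 1 (LR_gt M) = 0" using emission_prob_nonneg[of 1 "LR_gt M"] by simp
  then have "emission 0 (LR_gt M) = 0"
    using emission_LR_gt_le[OF M] emission_eq_emission_prob[of 1 "LR_gt M"] by simp
  then have gt0: "emission_prob 0 (LR_gt M) = 0" by (simp add: emission_prob_def)
  have cdf_eq: "LR_cdf disc p0 f t
      = 1 - (p0 0 * emission_prob 0 (LR_gt t) + p0 1 * emission_prob 1 (LR_gt t))" if "0 \<le> t" for t
    using LR_cdf_eq[OF that] p0_sum by (simp add: emission_prob_LR_le algebra_simps)
  have "0 \<le> p0 0 * emission_prob 0 (LR_gt (M + 1))" "0 \<le> p0 1 * emission_prob 1 (LR_gt (M + 1))"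
    using p0_nonneg[of 0] p0_nonneg[of 1] emission_prob_nonneg by simp_all
  then have "LR_cdf disc p0 f (M + 1) \<le> 1" using cdf_eq[of "M + 1"] M by linarith
  moreover have "LR_cdf disc p0 f M = 1" using cdf_eq[of M] M gt0 gt1 by simp
  moreover have "LR_cdf disc p0 f M < LR_cdf disc p0 f (M + 1)"
    by (rule strict_mono_onD[OF cdf_mono]) (use M in auto)
  ultimately show False by simp
qed

lemma opt_increment_le:
  assumes x0: "0 < x0"
  shows "\<exists>\<gamma>>0. \<forall>N\<ge>2. \<forall>x\<ge>x0. \<forall>d. 0 \<le> d \<and> d \<le> \<gamma> / 2
    \<longrightarrow> opt N (x + d) \<le> opt N x + d / \<gamma> + 1 / real N"
proof -
  define M where "M = 2 * flip_bound / x0"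
  define c where "c = p0 1 * emission_prob 1 (LR_gt M)"
  define \<gamma> where "\<gamma> = x0 * c / 2"
  define \<phi> :: "(nat \<Rightarrow> real) \<Rightarrow> nat \<Rightarrow> bool" where "\<phi> = (\<lambda>y i. y i \<in> LR_gt M)"
  have M: "0 < M" unfolding M_def using flip_bound_pos x0 by simp
  have c: "0 < c" unfolding c_def using p1_pos emission_prob_LR_gt_pos[OF M] by simp
  have \<gamma>: "0 < \<gamma>" unfolding \<gamma>_def using x0 c by simp
  have "opt N (x + d) \<le> opt N x + d / \<gamma> + 1 / real N"
    if N: "2 \<le> N" and x: "x0 \<le> x" and d: "0 \<le> d" "d \<le> \<gamma> / 2" for N x d
  proof (rule opt_le)
    show "1 \<le> N" "0 \<le> x + d" using N x x0 d by auto
    have "is_mtp disc N \<phi>" unfolding is_mtp_def \<phi>_def by (auto intro: is_event_coord)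
    moreover have "col_excess N x i (\<lambda>y. \<phi> y i) \<le> - \<gamma>" if "i < N" for i
    proof -
      have "col_excess N x i (\<lambda>y. \<phi> y i) \<le> (flip_bound / M - x) * c"
        unfolding \<phi>_def c_def using col_excess_LR_gt_le[OF that M] x x0 by simp
      also have "\<dots> \<le> (x0 / 2 - x0) * c"
        using x c flip_bound_pos x0 by (intro mult_right_mono) (auto simp: M_def)
      finally show ?thesis by (simp add: \<gamma>_def)
    qed
    ultimately show "mTDR disc p0 Q f N \<psi> \<le> opt N x + d / \<gamma> + 1 / real N"
      if "\<psi> \<in> feasible N (x + d)" for \<psi>
      using mTDR_le_opt_increment[OF N _ \<gamma> d _ _ that] x x0 by simp
  qed
  with \<gamma> show ?thesis by blast
qed

end

theorem lemma22:
  fixes disc :: bool and p0 :: "nat \<Rightarrow> real" and Q :: "nat \<Rightarrow> nat \<Rightarrow> real"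
    and f :: "nat \<Rightarrow> real \<Rightarrow> real" and xN yN :: "nat \<Rightarrow> real"
  assumes dens: "\<forall>j\<in>{0,1::nat}. is_density disc (f j)"
    and A1: "A1 disc f"
    and A2: "A2 Q p0"
    and cdf_cont: "continuous_on UNIV (LR_cdf disc p0 f)"
    and cdf_mono: "strict_mono_on {0..} (LR_cdf disc p0 f)"
    and x_nonneg: "\<forall>N. 0 \<le> xN N" and y_nonneg: "\<forall>N. 0 \<le> yN N"
    and diff: "(\<lambda>N. \<bar>xN N - yN N\<bar>) \<longlonglongrightarrow> 0"
  shows "(\<lambda>N. \<bar>opt_TDR disc p0 Q f N (xN N) - opt_TDR disc p0 Q f N (yN N)\<bar>) \<longlonglongrightarrow> 0"
proof -
  interpret two_state_hmm_LR disc p0 Q f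
    using dens A2 cdf_mono by unfold_locales
  have mono: "\<And>N x y. 1 \<le> N \<Longrightarrow> 0 \<le> x \<Longrightarrow> x \<le> y \<Longrightarrow> opt N x \<le> opt N y"
    by (rule opt_mono)
  show ?thesis
  proof (rule tendsto_abs_diff_zero_if_uniform_increment_bound[OF mono _ _ _ diff])
    show "\<exists>\<delta>>0. \<forall>\<^sub>F N in sequentially. \<forall>x\<ge>0. \<forall>d. 0 \<le> d \<and> d \<le> \<delta> \<longrightarrow> opt N (x + d) \<le> opt N x + e"
      if "0 < e" for e
      by (rule eventually_uniform_increment_bound[OF mono opt_near_zero opt_increment_le that])
  qed (use x_nonneg y_nonneg in auto)
qed

end
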